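(* Let $G$ be a connected $m$-uniform hypergraph on $n$ vertices which is odd-colorable. Suppose its incidence matrix $B_G$ has Smith normal form over $\mathbb{Z}_m$ with nonzero diagonal entries $d_1,\dots,d_r$. Then (1) $s(\mathcal{Q}(G))=s(\mathcal{L}(G))=s(\mathcal{A}(G))=m^{n-1-r}\prod_{i=1}^r d_i$; (2) $s(\mathcal{Q}(G))=|\mathbb{PV}_{\rho(\mathcal{Q}(G))}(\mathcal{Q}(G))|=|\mathbb{PV}_0(\mathcal{Q}(G))|=|\mathbb{PV}_0(\mathcal{L}(G))|$.
   Context: An $m$-uniform hypergraph $G$ on vertices $v_1,\dots,v_n$ has edges that are $m$-subsets. Adjacency tensor $\mathcal{A}(G)$: order $m$, dimension $n$, entry $\frac1{(m-1)!}$ at $(i_1,\dots,i_m)$ if $\{v_{i_1},\dots,v_{i_m}\}$ is an edge, else $0$. $\mathcal{D}(G)$ is the diagonal tensor of vertex degrees; $\mathcal{L}(G)=\mathcal{D}(G)-\mathcal{A}(G)$ (Laplacian tensor) and $\mathcal{Q}(G)=\mathcal{D}(G)+\mathcal{A}(G)$ (signless Laplacian tensor). For even $m$, $G$ is odd-colorable if there is $f:V(G)\to[m]$ with $\sum_{v\in e}f(v)\equiv m/2\pmod m$ for every edge $e$. Incidence matrix $B_G$: $b_{e,v}=1$ if $v\in e$, else $0$. Smith normal form over $\mathbb{Z}_m$: invertible $P,Q$ over $\mathbb{Z}_m$ with $PB_GQ$ diagonal with entries $d_1,\dots,d_r,0,\dots,0$, $1\le d_i\le m-1$, $d_i\mid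 d_{i+1}$, $d_i\mid m$. For a tensor $\mathcal{T}$, $(\mathcal{T}x^{m-1})_i=\sum_{i_2,\dots,i_m}t_{ii_2\cdots i_m}x_{i_2}\cdots x_{i_m}$; $\rho(\mathcal{T})$ is the largest modulus of eigenvalues $\lambda$ (those with $\mathcal{T}x^{m-1}=\lambda x^{[m-1]}$, $x\ne0$, $x^{[m-1]}=(x_i^{m-1})$); $\mathbb{PV}_\lambda(\mathcal{T})=\{x\in\mathbb{P}^{n-1}:\mathcal{T}x^{m-1}=\lambda x^{[m-1]}\}$. Stabilizing index: $s(\mathcal{T})=|\{D=\mathrm{diag}(d_1,\dots,d_n)\text{ invertible complex}:\mathcal{T}=D^{-(m-1)}\mathcal{T}D,\ d_1=1\}|$, where $D^{-(m-1)}\mathcal{T}D$ has entries $d_{i_1}^{-(m-1)}t_{i_1\cdots i_m}d_{i_2}\cdots d_{i_m}$. *)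

theory Defs
  imports Complex_Main
begin

text \<open>Vertices are 0,...,n-1 (v_{i+1} is vertex i). Tensors of order m and dimension n are functions on index
lists of length m with entries in {0..<n}; vectors in C^n are functions nat => complex
vanishing outside {0..<n}.\<close>

definition uniform_hypergraph :: "nat \<Rightarrow> nat \<Rightarrow> nat set set \<Rightarrow> bool" where
  "uniform_hypergraph m n E \<longleftrightarrow> (\<forall>e\<in>E. e \<subseteq> {0..<n} \<and> card e = m)"

definition hg_connected :: "nat \<Rightarrow> nat set set \<Rightarrow> bool" where
  "hg_connected n E \<longleftrightarrow>
     (\<forall>u<n. \<forall>v<n. (u, v) \<in> {(a, b). \<exists>e\<in>E. a \<in> e \<and> b \<in> e}\<^sup>*)"

definition odd_colorable :: "nat \<Rightarrow> nat set set \<Rightarrow> bool" where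
  "odd_colorable m E \<longleftrightarrow> even m \<and>
     (\<exists>f :: nat \<Rightarrow> nat. (\<forall>v. f v \<in> {1..m}) \<and>
        (\<forall>e\<in>E. (\<Sum>v\<in>e. f v) mod m = m div 2))"

definition hg_degree :: "nat set set \<Rightarrow> nat \<Rightarrow> nat" where
  "hg_degree E v = card {e\<in>E. v \<in> e}"

definition idx :: "nat \<Rightarrow> nat \<Rightarrow> nat list set" where
  "idx k n = {is. length is = k \<and> set is \<subseteq> {0..<n}}"

definition adj_tensor :: "nat \<Rightarrow> nat \<Rightarrow> nat set set \<Rightarrow> nat list \<Rightarrow> complex" where
  "adj_tensor m n E is =
     (if is \<in> idx m n \<and> set is \<in> E then 1 / of_nat (fact (m - 1)) else 0)"

definition deg_tensor :: "nat \<Rightarrow> nat \<Rightarrow> nat set set \<Rightarrow> nat list \<Rightarrow> complex" where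
  "deg_tensor m n E is =
     (if \<exists>i<n. is = replicate m i then of_nat (hg_degree E (hd is)) else 0)"

definition lap_tensor :: "nat \<Rightarrow> nat \<Rightarrow> nat set set \<Rightarrow> nat list \<Rightarrow> complex" where
  "lap_tensor m n E is = deg_tensor m n E is - adj_tensor m n E is"

definition slap_tensor :: "nat \<Rightarrow> nat \<Rightarrow> nat set set \<Rightarrow> nat list \<Rightarrow> complex" where
  "slap_tensor m n E is = deg_tensor m n E is + adj_tensor m n E is"

definition tensor_apply ::
  "nat \<Rightarrow> nat \<Rightarrow> (nat list \<Rightarrow> complex) \<Rightarrow> (nat \<Rightarrow> complex) \<Rightarrow> nat \<Rightarrow> complex" where
  "tensor_apply m n T x i = (\<Sum>is\<in>idx (m - 1) n. T (i # is) * (\<Prod>j<m - 1. x (is ! j)))"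

definition eigenpair ::
  "nat \<Rightarrow> nat \<Rightarrow> (nat list \<Rightarrow> complex) \<Rightarrow> complex \<Rightarrow> (nat \<Rightarrow> complex) \<Rightarrow> bool" where
  "eigenpair m n T lam x \<longleftrightarrow> (\<forall>i\<ge>n. x i = 0) \<and> (\<exists>i<n. x i \<noteq> 0) \<and>
     (\<forall>i<n. tensor_apply m n T x i = lam * x i ^ (m - 1))"

definition tensor_eigenvalue :: "nat \<Rightarrow> nat \<Rightarrow> (nat list \<Rightarrow> complex) \<Rightarrow> complex \<Rightarrow> bool" where
  "tensor_eigenvalue m n T lam \<longleftrightarrow> (\<exists>x. eigenpair m n T lam x)"

definition spectral_radius :: "nat \<Rightarrow> nat \<Rightarrow> (nat list \<Rightarrow> complex) \<Rightarrow> real" where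
  "spectral_radius m n T = Sup {cmod lam | lam. tensor_eigenvalue m n T lam}"

definition proj_eigvariety ::
  "nat \<Rightarrow> nat \<Rightarrow> (nat list \<Rightarrow> complex) \<Rightarrow> complex \<Rightarrow> (nat \<Rightarrow> complex) set set" where
  "proj_eigvariety m n T lam =
     {{(\<lambda>i. c * x i) | c. c \<noteq> 0} | x. eigenpair m n T lam x}"

text \<open>Stabilizing index; d i is the (i+1)-st diagonal entry, d 0 = 1.\<close>
definition stab_index :: "nat \<Rightarrow> nat \<Rightarrow> (nat list \<Rightarrow> complex) \<Rightarrow> nat" where
  "stab_index m n T = card {d :: nat \<Rightarrow> complex.
     (\<forall>i<n. d i \<noteq> 0) \<and> (\<forall>i\<ge>n. d i = 0) \<and> d 0 = 1 \<and>
     (\<forall>is\<in>idx m n. T is = inverse (d (is ! 0)) ^ (m - 1) * T is * (\<Prod>j\<in>{1..<m}. d (is ! j)))}"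

text \<open>Incidence matrix, rows indexed by 0..<k via an enumeration e of the edges.\<close>
definition incidence :: "(nat \<Rightarrow> nat set) \<Rightarrow> nat \<Rightarrow> nat \<Rightarrow> int" where
  "incidence e a v = (if v \<in> e a then 1 else 0)"

definition invertible_mod :: "nat \<Rightarrow> nat \<Rightarrow> (nat \<Rightarrow> nat \<Rightarrow> int) \<Rightarrow> bool" where
  "invertible_mod m k P \<longleftrightarrow> (\<exists>P'. \<forall>i<k. \<forall>j<k.
      (\<Sum>l<k. P i l * P' l j) mod int m = (if i = j then 1 else 0) mod int m \<and>
      (\<Sum>l<k. P' i l * P l j) mod int m = (if i = j then 1 else 0) mod int m)"

definition has_snf_mod ::
  "nat \<Rightarrow> nat \<Rightarrow> nat \<Rightarrow> (nat \<Rightarrow> nat \<Rightarrow> int) \<Rightarrow> nat \<Rightarrow> (nat \<Rightarrow> int) \<Rightarrow> bool" where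
  "has_snf_mod m k n B r d \<longleftrightarrow> r \<le> k \<and> r \<le> n \<and>
     (\<forall>i<r. 1 \<le> d i \<and> d i \<le> int m - 1 \<and> d i dvd int m) \<and>
     (\<forall>i. Suc i < r \<longrightarrow> d i dvd d (Suc i)) \<and>
     (\<exists>P Q. invertible_mod m k P \<and> invertible_mod m n Q \<and>
        (\<forall>i<k. \<forall>j<n. (\<Sum>a<k. \<Sum>b<n. P i a * B a b * Q b j) mod int m =
                        (if i = j \<and> i < r then d i else 0) mod int m))"

end

(*
  A diagonal matrix diag(d) stabilizes each of A(G), L(G), Q(G) exactly when
  prod_{j in e - {i}} d_j = d_i^(m-1) for every edge e and vertex i in e.  By connectivity
  every d_i is then an m-th root of unity omega^(f_i), and the condition says that the
  incidence matrix kills f modulo m.  The Smith normal form counts these f as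
  m^(n-r) * prod d_i, and the normalization d_1 = 1 divides by m.

  An eigenvector x of L at 0, of Q at 0, or of Q at rho(Q) satisfies at every vertex i an
  equation sum_{e containing i} prod_{e - {i}} x = kappa c_i x_i^(m-1) with |kappa| = 1,
  which a positive vector u satisfies with kappa = 1: the all-ones vector, resp. a Perron
  vector obtained by maximizing x . Q x^(m-1) on the unit m-sphere.  At a vertex where
  |x|/u is maximal the equation is an equality case of the triangle inequality, which forces
  x/u to satisfy the stabilizer condition with the factor kappa; connectivity spreads this
  to all vertices.  So the normalized eigenvectors are u times the stabilizing diagonals
  (times omega^f for an odd colouring f when kappa = -1), and all counts agree.  The same
  maximal-ratio argument bounds every eigenvalue of Q by the Perron value, which is
  therefore rho(Q).
*)
theory Submission
  imports Defs "HOL-Combinatorics.Multiset_Permutations" "HOL-Library.FuncSet" "HOL-Analysis.Analysis"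
begin

lemma finite_idx: "finite (idx k n)"
proof -
  have "idx k n = {xs. set xs \<subseteq> {0..<n} \<and> length xs = k}" unfolding idx_def by auto
  thus ?thesis using finite_lists_length_eq[of "{0..<n}" k] by simp
qed

lemma prod_nth_eq_prod_set:
  assumes "distinct xs"
  shows "(\<Prod>j<length xs. f (xs ! j)) = (\<Prod>v\<in>set xs. f v)"
  using assms by (intro prod.reindex_bij_betw) (simp add: bij_betw_nth lessThan_atLeast0)

lemma prod_tail_eq_prod_set:
  assumes "distinct xs"
  shows "(\<Prod>j\<in>{1..<length xs}. f (xs ! j)) = (\<Prod>v\<in>set xs - {xs ! 0}. f v)"
proof (cases xs)
  case (Cons a ys)
  have "{1..<length xs} = Suc ` {..<length ys}"
    using Cons by (simp add: image_Suc_lessThan atLeastLessThanSuc_atLeastAtMost)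
  hence "(\<Prod>j\<in>{1..<length xs}. f (xs ! j)) = (\<Prod>j<length ys. f (ys ! j))"
    using Cons by (simp add: prod.reindex)
  also have "\<dots> = (\<Prod>v\<in>set ys. f v)"
    using assms Cons by (intro prod.reindex_bij_betw) (simp add: bij_betw_nth lessThan_atLeast0)
  finally show ?thesis using assms Cons by simp
qed simp

lemma tensor_apply_scale:
  "tensor_apply m n T (\<lambda>j. c * x j) i = c ^ (m - 1) * tensor_apply m n T x i"
  unfolding tensor_apply_def by (simp add: prod.distrib sum_distrib_left mult_ac)

lemma eigenpair_scale:
  assumes "eigenpair m n T lam x" "c \<noteq> 0"
  shows "eigenpair m n T lam (\<lambda>i. c * x i)"
  using assms unfolding eigenpair_def by (simp add: tensor_apply_scale power_mult_distrib)

lemma card_proj_eigvariety: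
  assumes nz: "\<And>x. eigenpair m n T lam x \<Longrightarrow> x 0 \<noteq> 0"
  shows "card (proj_eigvariety m n T lam) = card {x. eigenpair m n T lam x \<and> x 0 = 1}"
proof -
  define ray where "ray x = {(\<lambda>i. c * x i) | c. c \<noteq> 0}" for x :: "nat \<Rightarrow> complex"
  define X where "X = {x. eigenpair m n T lam x \<and> x 0 = 1}"
  have ray_normalize: "ray x = ray (\<lambda>i. inverse (x 0) * x i)" if "x 0 \<noteq> 0" for x
    unfolding ray_def
  proof (intro set_eqI iffI)
    fix q assume "q \<in> {(\<lambda>i. c * x i) | c. c \<noteq> 0}"
    then obtain c where "c \<noteq> 0" "q = (\<lambda>i. c * x i)" by auto
    moreover from this have "q = (\<lambda>i. (c * x 0) * (inverse (x 0) * x i))" using that by auto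
    ultimately show "q \<in> {(\<lambda>i. c * (inverse (x 0) * x i)) | c. c \<noteq> 0}"
      using that by (intro CollectI exI[of _ "c * x 0"]) auto
  next
    fix q assume "q \<in> {(\<lambda>i. c * (inverse (x 0) * x i)) | c. c \<noteq> 0}"
    then obtain c where "c \<noteq> 0" "q = (\<lambda>i. (c * inverse (x 0)) * x i)" by (auto simp: mult.assoc)
    thus "q \<in> {(\<lambda>i. c * x i) | c. c \<noteq> 0}"
      using that by (intro CollectI exI[of _ "c * inverse (x 0)"]) auto
  qed
  have "proj_eigvariety m n T lam = ray ` X"
  proof safe
    fix p assume "p \<in> proj_eigvariety m n T lam"
    then obtain x where x: "eigenpair m n T lam x" and p: "p = ray x"
      unfolding proj_eigvariety_def ray_def by auto
    have "(\<lambda>i. inverse (x 0) * x i) \<in> X"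
      unfolding X_def using eigenpair_scale[OF x] nz[OF x] by simp
    thus "p \<in> ray ` X" unfolding p ray_normalize[of x, OF nz[OF x]] by blast
  next
    fix x assume "x \<in> X"
    thus "ray x \<in> proj_eigvariety m n T lam" unfolding proj_eigvariety_def ray_def X_def by blast
  qed
  moreover have "inj_on ray X"
  proof (rule inj_onI)
    fix x y assume "x \<in> X" "y \<in> X" "ray x = ray y"
    moreover have "x \<in> ray x" unfolding ray_def by (auto intro!: exI[of _ 1])
    ultimately obtain c where "x = (\<lambda>i. c * y i)" unfolding ray_def by auto
    moreover from this have "c = 1" using \<open>x \<in> X\<close> \<open>y \<in> X\<close> unfolding X_def by simp
    ultimately show "x = y" by simp
  qed
  ultimately show ?thesis unfolding X_def by (simp add: card_image)
qed

lemma exists_small_mult_less: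
  fixes a b \<delta> :: real
  assumes "0 < a" "0 < \<delta>" "0 \<le> b"
  shows "\<exists>\<epsilon>. 0 < \<epsilon> \<and> \<epsilon> \<le> \<delta> \<and> b * \<epsilon> < a"
proof (intro exI conjI)
  define \<epsilon> where "\<epsilon> = min \<delta> (a / (2 * (b + 1)))"
  show "0 < \<epsilon>" "\<epsilon> \<le> \<delta>" using assms by (auto simp: \<epsilon>_def)
  have "b * \<epsilon> \<le> b * (a / (2 * (b + 1)))" using assms by (intro mult_left_mono) (auto simp: \<epsilon>_def)
  also have "\<dots> < a" using assms by (simp add: field_simps) (simp add: add_nonneg_pos)
  finally show "b * \<epsilon> < a" .
qed

lemma cmod_diff_power2: "cmod (a - b) ^ 2 = cmod a ^ 2 - 2 * Re (a * cnj b) + cmod b ^ 2"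
  unfolding cmod_power2 by (simp add: power2_diff)

lemma weighted_mean_eq_boundary:
  fixes z :: "'a \<Rightarrow> complex" and w :: "'a \<Rightarrow> real"
  assumes "finite A" and w: "\<forall>a\<in>A. 0 < w a" and z: "\<forall>a\<in>A. cmod (z a) \<le> cmod \<zeta>"
    and mean: "(\<Sum>a\<in>A. of_real (w a) * z a) = of_real (\<Sum>a\<in>A. w a) * \<zeta>"
    and "a \<in> A"
  shows "z a = \<zeta>"
proof -
  define p where "p b = Re (z b * cnj \<zeta>)" for b
  have p_le: "p b \<le> cmod \<zeta> ^ 2" if "b \<in> A" for b
  proof -
    have "p b \<le> cmod (z b) * cmod \<zeta>"
      unfolding p_def using complex_Re_le_cmod[of "z b * cnj \<zeta>"] by (simp add: norm_mult)
    also have "\<dots> \<le> cmod \<zeta> * cmod \<zeta>" using z that by (intro mult_right_mono) auto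
    finally show ?thesis by (simp add: power2_eq_square)
  qed
  have "(\<Sum>b\<in>A. of_real (w b) * z b) * cnj \<zeta> = of_real (\<Sum>b\<in>A. w b) * (\<zeta> * cnj \<zeta>)"
    unfolding mean by (simp only: mult.assoc)
  also have "\<zeta> * cnj \<zeta> = of_real (cmod \<zeta> ^ 2)" by (rule complex_norm_square[symmetric])
  finally have "Re ((\<Sum>b\<in>A. of_real (w b) * z b) * cnj \<zeta>) = (\<Sum>b\<in>A. w b) * cmod \<zeta> ^ 2"
    by (simp only: of_real_mult[symmetric] Re_complex_of_real)
  moreover have "Re ((\<Sum>b\<in>A. of_real (w b) * z b) * cnj \<zeta>) = (\<Sum>b\<in>A. w b * p b)"
    unfolding sum_distrib_right Re_sum p_def by (intro sum.cong refl) (simp add: algebra_simps)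
  ultimately have "(\<Sum>b\<in>A. w b * (cmod \<zeta> ^ 2 - p b)) = 0"
    by (simp add: right_diff_distrib sum_subtractf sum_distrib_right[symmetric])
  moreover have "\<forall>b\<in>A. 0 \<le> w b * (cmod \<zeta> ^ 2 - p b)"
    using w p_le by (simp add: less_imp_le)
  ultimately have "w a * (cmod \<zeta> ^ 2 - p a) = 0"
    using \<open>a \<in> A\<close> by (simp add: sum_nonneg_eq_0_iff[OF \<open>finite A\<close>])
  moreover have "w a \<noteq> 0" using w \<open>a \<in> A\<close> by auto
  ultimately have pa: "p a = cmod \<zeta> ^ 2" by simp
  have "cmod (z a - \<zeta>) ^ 2 = cmod (z a) ^ 2 - 2 * p a + cmod \<zeta> ^ 2"
    unfolding p_def by (rule cmod_diff_power2)
  also have "cmod (z a) ^ 2 \<le> cmod \<zeta> ^ 2" using z \<open>a \<in> A\<close> by (intro power_mono) auto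
  hence "cmod (z a) ^ 2 - 2 * p a + cmod \<zeta> ^ 2 \<le> 0" using pa by simp
  finally show ?thesis by simp
qed

lemma prod_eq_power_imp_eq:
  fixes f :: "'a \<Rightarrow> real"
  assumes A: "finite A" "j \<in> A" and f: "\<forall>i\<in>A. 0 \<le> f i \<and> f i \<le> t"
    and prod: "(\<Prod>i\<in>A. f i) = t ^ card A" and "0 < t"
  shows "f j = t"
proof (rule ccontr)
  assume "f j \<noteq> t"
  hence "f j < t" using f A by auto
  have "(\<Prod>i\<in>A. f i) = f j * (\<Prod>i\<in>A - {j}. f i)" by (rule prod.remove[OF A])
  also have "\<dots> \<le> f j * t ^ card (A - {j})"
  proof (rule mult_left_mono)
    have "(\<Prod>i\<in>A - {j}. f i) \<le> (\<Prod>i\<in>A - {j}. t)" by (rule prod_mono) (use f in auto)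
    thus "(\<Prod>i\<in>A - {j}. f i) \<le> t ^ card (A - {j})" by simp
    show "0 \<le> f j" using f A by auto
  qed
  also have "\<dots> < t * t ^ card (A - {j})"
    by (rule mult_strict_right_mono[OF \<open>f j < t\<close>]) (use \<open>0 < t\<close> in simp)
  also have "\<dots> = t ^ card A" unfolding card.remove[OF A] by simp
  finally show False using prod by simp
qed

lemma max_ratio_attained:
  fixes x :: "nat \<Rightarrow> complex" and u :: "nat \<Rightarrow> real"
  assumes u: "\<forall>i<n. u i > 0" and x: "\<exists>i<n. x i \<noteq> 0"
  obtains t i0 where "0 < t" "i0 < n" "cmod (x i0) = t * u i0" "\<forall>j<n. cmod (x j) \<le> t * u j"
proof -
  define R where "R i = cmod (x i) / u i" for i
  define t where "t = Max (R ` {..<n})"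
  obtain i1 where i1: "i1 < n" "x i1 \<noteq> 0" using x by blast
  have R_le: "R i \<le> t" if "i < n" for i unfolding t_def using that by auto
  have "t \<in> R ` {..<n}" unfolding t_def using i1 by (intro Max_in) auto
  then obtain i0 where i0: "i0 < n" "R i0 = t" by auto
  have "0 < R i1" using i1 u unfolding R_def by auto
  hence "0 < t" using R_le[OF i1(1)] by simp
  moreover have "cmod (x j) \<le> t * u j" if "j < n" for j
    using R_le[OF that] u that unfolding R_def by (simp add: divide_le_eq mult.commute)
  moreover have "cmod (x i0) = t * u i0" using i0 u unfolding R_def by (auto simp: field_simps)
  ultimately show ?thesis using that i0 by blast
qed

section \<open>Roots of unity\<close>

definition unit_root :: "nat \<Rightarrow> complex" where
  "unit_root m = cis (2 * pi / real m)"

lemma unit_root_power: "unit_root m ^ j = cis (2 * pi * real j / real m)"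
  unfolding unit_root_def Complex.DeMoivre by (simp add: field_simps)

lemma unit_root_nonzero [simp]: "unit_root m \<noteq> 0"
  unfolding unit_root_def by simp

lemma unit_root_power_self: "m \<ge> 1 \<Longrightarrow> unit_root m ^ m = 1"
  unfolding unit_root_power by (simp add: complex_eq_iff)

lemma unit_root_power_power_self:
  assumes "m \<ge> 1"
  shows "(unit_root m ^ j) ^ m = 1"
proof -
  have "(unit_root m ^ j) ^ m = (unit_root m ^ m) ^ j" by (simp only: power_mult[symmetric] mult.commute)
  thus ?thesis using unit_root_power_self[OF assms] by simp
qed

lemma unit_root_power_mod:
  assumes "m \<ge> 1"
  shows "unit_root m ^ j = unit_root m ^ (j mod m)"
proof -
  have "unit_root m ^ j = (unit_root m ^ m) ^ (j div m) * unit_root m ^ (j mod m)"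
    by (metis div_mult_mod_eq power_add power_mult mult.commute)
  thus ?thesis using unit_root_power_self[OF assms] by simp
qed

lemma unit_root_power_inj:
  assumes "a < m" "b < m" "unit_root m ^ a = unit_root m ^ b"
  shows "a = b"
  using Complex.bij_betw_roots_unity[of m] assms unfolding bij_betw_def inj_on_def unit_root_power by auto

lemma unit_root_power_eq_1_iff:
  assumes "m \<ge> 1"
  shows "unit_root m ^ j = 1 \<longleftrightarrow> m dvd j"
proof
  assume "unit_root m ^ j = 1"
  hence "unit_root m ^ (j mod m) = unit_root m ^ 0" using unit_root_power_mod[OF assms] by simp
  thus "m dvd j" using unit_root_power_inj[of "j mod m" m 0] assms by auto
next
  assume "m dvd j"
  thus "unit_root m ^ j = 1" using unit_root_power_self[OF assms] by (auto simp: power_mult)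
qed

lemma root_of_unity_eq_unit_root_power:
  assumes "m \<ge> 1" "z ^ m = 1"
  shows "\<exists>j<m. z = unit_root m ^ j"
  using Complex.bij_betw_roots_unity[of m] assms unfolding bij_betw_def unit_root_power by auto

lemma unit_root_power_half:
  assumes "even m" "m \<ge> 1"
  shows "unit_root m ^ (m div 2) = -1"
proof -
  have "2 * pi * real (m div 2) / real m = pi" using assms
    by (auto simp: field_simps real_of_nat_div elim!: evenE)
  thus ?thesis unfolding unit_root_power by simp
qed

section \<open>Kernels modulo \<open>m\<close> and the Smith normal form\<close>

definition residue_vectors :: "nat \<Rightarrow> nat \<Rightarrow> (nat \<Rightarrow> int) set" where
  "residue_vectors m n = {f. (\<forall>i<n. 0 \<le> f i \<and> f i < int m) \<and> (\<forall>i\<ge>n. f i = 0)}"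

definition mat_vec_mod :: "nat \<Rightarrow> nat \<Rightarrow> (nat \<Rightarrow> nat \<Rightarrow> int) \<Rightarrow> (nat \<Rightarrow> int) \<Rightarrow> nat \<Rightarrow> int" where
  "mat_vec_mod m n Q y = (\<lambda>j. if j < n then (\<Sum>b<n. Q j b * y b) mod int m else 0)"

definition kernel_mod :: "nat \<Rightarrow> nat \<Rightarrow> nat \<Rightarrow> (nat \<Rightarrow> nat \<Rightarrow> int) \<Rightarrow> (nat \<Rightarrow> int) set" where
  "kernel_mod m k n B = {f \<in> residue_vectors m n. \<forall>a<k. (\<Sum>v<n. B a v * f v) mod int m = 0}"

lemma sum_mod_cong:
  assumes "\<And>x. x \<in> A \<Longrightarrow> f x mod M = g x mod M"
  shows "(\<Sum>x\<in>A. f x) mod M = (\<Sum>x\<in>A. g x) mod (M::int)"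
proof -
  have "(\<Sum>x\<in>A. f x) mod M = (\<Sum>x\<in>A. f x mod M) mod M" by (simp add: mod_sum_eq)
  also have "\<dots> = (\<Sum>x\<in>A. g x mod M) mod M" using assms by (simp cong: sum.cong)
  also have "\<dots> = (\<Sum>x\<in>A. g x) mod M" by (simp add: mod_sum_eq)
  finally show ?thesis .
qed

lemma mat_mult_assoc_mod:
  "(\<Sum>b<n. A j b * ((\<Sum>c<n'. C b c * y c) mod M)) mod M
   = (\<Sum>c<n'. (\<Sum>b<n. A j b * C b c) * y c) mod (M::int)"
proof -
  have "(\<Sum>b<n. A j b * ((\<Sum>c<n'. C b c * y c) mod M)) mod M
      = (\<Sum>b<n. A j b * (\<Sum>c<n'. C b c * y c)) mod M"
    by (rule sum_mod_cong) (simp add: mod_mult_right_eq)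
  also have "(\<Sum>b<n. A j b * (\<Sum>c<n'. C b c * y c)) = (\<Sum>c<n'. (\<Sum>b<n. A j b * C b c) * y c)"
    by (simp add: sum_distrib_left sum_distrib_right sum.swap[of _ "{..<n}"] mult_ac)
  finally show ?thesis .
qed

lemma delta_sum_mod:
  assumes "\<And>c. c < n \<Longrightarrow> D c mod M = (if j = c then 1 else 0) mod M" and "j < (n::nat)"
  shows "(\<Sum>c<n. D c * y c) mod M = y j mod (M::int)"
proof -
  have "(\<Sum>c<n. D c * y c) mod M = (\<Sum>c<n. (if j = c then 1 else 0) * y c) mod M"
    using assms(1) by (intro sum_mod_cong) (metis lessThan_iff mod_mult_left_eq)
  also have "(\<Sum>c<n. (if j = c then 1 else 0) * y c) = y j"
    using assms(2) by (simp add: if_distrib[of "\<lambda>z. z * _"] sum.If_cases)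
  finally show ?thesis .
qed

lemma mat_vec_mod_in_residue_vectors: "m \<ge> 1 \<Longrightarrow> mat_vec_mod m n Q y \<in> residue_vectors m n"
  unfolding mat_vec_mod_def residue_vectors_def by auto

lemma mat_vec_mod_inverse:
  assumes inv: "\<forall>i<n. \<forall>j<n. (\<Sum>l<n. Q' i l * Q l j) mod int m = (if i = j then 1 else 0) mod int m"
    and y: "y \<in> residue_vectors m n"
  shows "mat_vec_mod m n Q' (mat_vec_mod m n Q y) = y"
proof
  fix j
  show "mat_vec_mod m n Q' (mat_vec_mod m n Q y) j = y j"
  proof (cases "j < n")
    case True
    have "mat_vec_mod m n Q' (mat_vec_mod m n Q y) j
        = (\<Sum>b<n. Q' j b * ((\<Sum>c<n. Q b c * y c) mod int m)) mod int m"
      unfolding mat_vec_mod_def using True by simp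
    also have "\<dots> = (\<Sum>c<n. (\<Sum>b<n. Q' j b * Q b c) * y c) mod int m" by (rule mat_mult_assoc_mod)
    also have "\<dots> = y j mod int m" using inv True by (intro delta_sum_mod) auto
    finally show ?thesis using y True unfolding residue_vectors_def by simp
  next
    case False thus ?thesis using y unfolding mat_vec_mod_def residue_vectors_def by simp
  qed
qed

lemma card_residue_vectors_restrict:
  assumes "\<And>i. i < n \<Longrightarrow> A i \<subseteq> {0..<int m}"
  shows "card {f \<in> residue_vectors m n. \<forall>i<n. f i \<in> A i} = (\<Prod>i<n. card (A i))"
proof -
  have "bij_betw (\<lambda>f. restrict f {..<n}) {f \<in> residue_vectors m n. \<forall>i<n. f i \<in> A i} (PiE {..<n} A)"
  proof (rule bij_betw_byWitness[where f' = "\<lambda>g i. if i < n then g i else 0"])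
    show "(\<lambda>g i. if i < n then g i else 0) ` PiE {..<n} A \<subseteq> {f \<in> residue_vectors m n. \<forall>i<n. f i \<in> A i}"
      using assms unfolding residue_vectors_def by (auto simp: PiE_def Pi_def) fastforce+
  qed (auto simp: residue_vectors_def PiE_def extensional_def)
  hence "card {f \<in> residue_vectors m n. \<forall>i<n. f i \<in> A i} = card (PiE {..<n} A)"
    by (rule bij_betw_same_card)
  thus ?thesis by (simp add: card_PiE)
qed

lemma card_multiples_mod:
  assumes "1 \<le> c" "c dvd int m" "m \<ge> 1"
  shows "card {y \<in> {0..<int m}. int m dvd c * y} = nat c"
proof -
  obtain q where q: "int m = c * q" using assms(2) by (auto simp: dvd_def)
  have "0 < c * q" using q assms(3) by simp
  hence qpos: "q > 0" using assms(1) zero_less_mult_pos by force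
  have "{y \<in> {0..<int m}. int m dvd c * y} = (\<lambda>t. q * t) ` {0..<c}"
  proof safe
    fix y assume y: "y \<in> {0..<int m}" "int m dvd c * y"
    hence "q dvd y" using q assms(1) by simp
    then obtain t where t: "y = q * t" by (auto simp: dvd_def)
    have "0 \<le> t" using y t qpos by (simp add: zero_le_mult_iff)
    moreover have "t < c" using y t q qpos by (simp add: mult.commute)
    ultimately show "y \<in> (\<lambda>t. q * t) ` {0..<c}" using t by auto
  next
    fix t assume "t \<in> {0..<c}"
    thus "q * t \<in> {0..<int m}" using q qpos by (auto simp: mult.commute)
    show "int m dvd c * (q * t)" using q by simp
  qed
  moreover have "inj_on (\<lambda>t. q * t) {0..<c}" using qpos by (auto simp: inj_on_def)
  ultimately show ?thesis by (simp add: card_image)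
qed

lemma kernel_mod_invertible_left:
  assumes "invertible_mod m k P"
  shows "(\<forall>a<k. b a mod int m = 0) \<longleftrightarrow> (\<forall>i<k. (\<Sum>a<k. P i a * b a) mod int m = 0)"
proof
  assume "\<forall>a<k. b a mod int m = 0"
  hence "(\<Sum>a<k. P i a * b a) mod int m = (\<Sum>a<k. P i a * 0) mod int m" for i
    by (intro sum_mod_cong) (metis lessThan_iff mod_mult_right_eq)
  thus "\<forall>i<k. (\<Sum>a<k. P i a * b a) mod int m = 0" by simp
next
  assume Pb: "\<forall>i<k. (\<Sum>a<k. P i a * b a) mod int m = 0"
  obtain P' where P': "\<forall>i<k. \<forall>j<k. (\<Sum>l<k. P' i l * P l j) mod int m = (if i = j then 1 else 0) mod int m"
    using assms unfolding invertible_mod_def by blast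
  show "\<forall>a<k. b a mod int m = 0"
  proof (intro allI impI)
    fix a assume a: "a < k"
    have "b a mod int m = (\<Sum>c<k. (\<Sum>l<k. P' a l * P l c) * b c) mod int m"
      using P' a by (intro delta_sum_mod[symmetric]) auto
    also have "\<dots> = (\<Sum>l<k. P' a l * ((\<Sum>c<k. P l c * b c) mod int m)) mod int m"
      by (rule mat_mult_assoc_mod[symmetric])
    finally show "b a mod int m = 0" using Pb by simp
  qed
qed

lemma snf_kernel_condition:
  assumes D: "\<forall>i<k. \<forall>j<n. (\<Sum>a<k. \<Sum>b<n. P i a * B a b * Q b j) mod int m =
                        (if i = j \<and> i < r then d i else 0) mod int m"
    and "r \<le> n" and "i < k"
  shows "(\<Sum>a<k. P i a * (\<Sum>v<n. B a v * mat_vec_mod m n Q y v)) mod int m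
         = (if i < r then d i * y i else 0) mod int m"
proof -
  have "(\<Sum>a<k. P i a * (\<Sum>v<n. B a v * mat_vec_mod m n Q y v))
      = (\<Sum>v<n. (\<Sum>a<k. P i a * B a v) * ((\<Sum>c<n. Q v c * y c) mod int m))"
    by (simp add: mat_vec_mod_def sum_distrib_left sum_distrib_right sum.swap[of _ "{..<k}"] mult_ac)
  hence "(\<Sum>a<k. P i a * (\<Sum>v<n. B a v * mat_vec_mod m n Q y v)) mod int m
      = (\<Sum>c<n. (\<Sum>v<n. (\<Sum>a<k. P i a * B a v) * Q v c) * y c) mod int m"
    using mat_mult_assoc_mod[where A = "\<lambda>_ v. \<Sum>a<k. P i a * B a v"] by simp
  also have "\<dots> = (\<Sum>c<n. (if i = c \<and> i < r then d i else 0) * y c) mod int m"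
  proof (rule sum_mod_cong)
    fix c assume "c \<in> {..<n}"
    moreover have "(\<Sum>v<n. (\<Sum>a<k. P i a * B a v) * Q v c) = (\<Sum>a<k. \<Sum>b<n. P i a * B a b * Q b c)"
      by (simp add: sum_distrib_right sum.swap[of _ "{..<n}"])
    ultimately have "(\<Sum>v<n. (\<Sum>a<k. P i a * B a v) * Q v c) mod int m
        = (if i = c \<and> i < r then d i else 0) mod int m"
      using D \<open>i < k\<close> by simp
    thus "(\<Sum>v<n. (\<Sum>a<k. P i a * B a v) * Q v c) * y c mod int m
        = (if i = c \<and> i < r then d i else 0) * y c mod int m"
      by (rule mod_mult_cong[OF _ refl])
  qed
  also have "(\<Sum>c<n. (if i = c \<and> i < r then d i else 0) * y c)
      = (\<Sum>c<n. if c = i then (if i < r then d i * y i else 0) else 0)"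
    by (intro sum.cong) auto
  also have "\<dots> = (if i < r then d i * y i else 0)"
    using \<open>r \<le> n\<close> by auto
  finally show ?thesis .
qed

lemma card_kernel_mod_snf:
  assumes snf: "has_snf_mod m k n B r d" and m: "m \<ge> 1"
  shows "card (kernel_mod m k n B) = nat (\<Prod>i<r. d i) * m ^ (n - r)"
proof -
  have rk: "r \<le> k" and rn: "r \<le> n" and dd: "\<forall>i<r. 1 \<le> d i \<and> d i dvd int m"
    using snf unfolding has_snf_mod_def by auto
  obtain P Q where P: "invertible_mod m k P" and Q: "invertible_mod m n Q"
    and D: "\<forall>i<k. \<forall>j<n. (\<Sum>a<k. \<Sum>b<n. P i a * B a b * Q b j) mod int m =
                        (if i = j \<and> i < r then d i else 0) mod int m"
    using snf unfolding has_snf_mod_def by blast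
  obtain Q' where Q': "\<forall>i<n. \<forall>j<n.
      (\<Sum>l<n. Q i l * Q' l j) mod int m = (if i = j then 1 else 0) mod int m \<and>
      (\<Sum>l<n. Q' i l * Q l j) mod int m = (if i = j then 1 else 0) mod int m"
    using Q unfolding invertible_mod_def by blast
  define A where "A i = {z \<in> {0..<int m}. i < r \<longrightarrow> int m dvd d i * z}" for i
  define Y where "Y = {y \<in> residue_vectors m n. \<forall>i<n. y i \<in> A i}"
  have kernel_iff: "mat_vec_mod m n Q y \<in> kernel_mod m k n B \<longleftrightarrow> (\<forall>i<r. int m dvd d i * y i)" for y
  proof -
    have "mat_vec_mod m n Q y \<in> kernel_mod m k n B \<longleftrightarrow>
        (\<forall>i<k. (\<Sum>a<k. P i a * (\<Sum>v<n. B a v * mat_vec_mod m n Q y v)) mod int m = 0)"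
      unfolding kernel_mod_def
      using mat_vec_mod_in_residue_vectors[OF m] kernel_mod_invertible_left[OF P] by simp
    also have "\<dots> \<longleftrightarrow> (\<forall>i<k. (if i < r then d i * y i else 0) mod int m = 0)"
      using snf_kernel_condition[OF D rn] by simp
    also have "\<dots> \<longleftrightarrow> (\<forall>i<r. int m dvd d i * y i)"
      using rk by (force simp: dvd_eq_mod_eq_0)
    finally show ?thesis .
  qed
  have "bij_betw (mat_vec_mod m n Q) Y (kernel_mod m k n B)"
  proof (rule bij_betw_byWitness[where f' = "mat_vec_mod m n Q'"])
    show "\<forall>y\<in>Y. mat_vec_mod m n Q' (mat_vec_mod m n Q y) = y"
      using mat_vec_mod_inverse[of n Q' Q m] Q' unfolding Y_def by auto
    show "\<forall>f\<in>kernel_mod m k n B. mat_vec_mod m n Q (mat_vec_mod m n Q' f) = f"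
      using mat_vec_mod_inverse[of n Q Q' m] Q' unfolding kernel_mod_def by auto
    show "mat_vec_mod m n Q ` Y \<subseteq> kernel_mod m k n B"
      using kernel_iff rn unfolding Y_def A_def by auto
    show "mat_vec_mod m n Q' ` kernel_mod m k n B \<subseteq> Y"
    proof safe
      fix f assume f: "f \<in> kernel_mod m k n B"
      hence "mat_vec_mod m n Q (mat_vec_mod m n Q' f) \<in> kernel_mod m k n B"
        using mat_vec_mod_inverse[of n Q Q' m f] Q' unfolding kernel_mod_def by auto
      thus "mat_vec_mod m n Q' f \<in> Y"
        using kernel_iff mat_vec_mod_in_residue_vectors[OF m]
        unfolding Y_def A_def residue_vectors_def by auto
    qed
  qed
  hence "card (kernel_mod m k n B) = card Y" by (simp add: bij_betw_same_card)
  also have "\<dots> = (\<Prod>i<n. card (A i))"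
    unfolding Y_def by (rule card_residue_vectors_restrict) (auto simp: A_def)
  also have "\<dots> = (\<Prod>i<n. if i < r then nat (d i) else m)"
  proof (rule prod.cong[OF refl])
    fix i show "card (A i) = (if i < r then nat (d i) else m)"
    proof (cases "i < r")
      case False
      hence "A i = {0..<int m}" by (auto simp: A_def)
      thus ?thesis using False by simp
    qed (use dd card_multiples_mod[OF _ _ m] in \<open>simp add: A_def\<close>)
  qed
  also have "\<dots> = (\<Prod>i<r. nat (d i)) * m ^ (n - r)"
  proof -
    define g where "g i = (if i < r then nat (d i) else m)" for i
    have "prod g {..<n} = prod g {..<r} * prod g {r..<n}"
      using prod.atLeastLessThan_concat[of 0 r n g] rn by (simp add: lessThan_atLeast0)
    thus ?thesis unfolding g_def by simp
  qed
  also have "(\<Prod>i<r. nat (d i)) = nat (\<Prod>i<r. d i)"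
  proof -
    have "int (\<Prod>i<r. nat (d i)) = (\<Prod>i<r. d i)"
      unfolding of_nat_prod using dd by (intro prod.cong) auto
    thus ?thesis by (metis nat_int)
  qed
  finally show ?thesis .
qed

section \<open>Tensors of a uniform hypergraph\<close>

locale uniform_hg =
  fixes m n :: nat and E :: "nat set set"
  assumes m_ge_2: "m \<ge> 2" and uniform: "uniform_hypergraph m n E"
begin

lemma edge_subset: "e \<in> E \<Longrightarrow> e \<subseteq> {0..<n}"
  using uniform unfolding uniform_hypergraph_def by auto

lemma card_edge: "e \<in> E \<Longrightarrow> card e = m"
  using uniform unfolding uniform_hypergraph_def by auto

lemma finite_edge: "e \<in> E \<Longrightarrow> finite e"
  using card_edge m_ge_2 card.infinite by fastforce

lemma card_edge_minus: "e \<in> E \<Longrightarrow> i \<in> e \<Longrightarrow> card (e - {i}) = m - 1"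
  using card_edge finite_edge by (simp add: card_Diff_singleton)

lemma edge_nonempty: "e \<in> E \<Longrightarrow> e \<noteq> {}"
  using card_edge[of e] m_ge_2 by auto

lemma prod_edge_remove: "e \<in> E \<Longrightarrow> a \<in> e \<Longrightarrow> (\<Prod>j\<in>e. x j) = x a * (\<Prod>j\<in>e - {a}. x j)"
  using finite_edge by (simp add: prod.remove)

lemma finite_edges: "finite E"
  using edge_subset by (intro finite_subset[of E "Pow {0..<n}"]) auto

definition edges_at :: "nat \<Rightarrow> nat set set" where
  "edges_at i = {e \<in> E. i \<in> e}"

lemma finite_edges_at: "finite (edges_at i)"
  using finite_edges unfolding edges_at_def by auto

lemma hg_degree_eq_card: "hg_degree E i = card (edges_at i)"
  unfolding hg_degree_def edges_at_def ..

lemma power_eq_mult_power_pred: "x ^ m = x * x ^ (m - 1)"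
  using m_ge_2 by (cases m) auto

lemma replicate_eq_Cons: "replicate m i = i # replicate (m - 1) i"
  using m_ge_2 by (cases m) auto

lemma replicate_not_edge: "set (replicate m i) \<notin> E"
  using card_edge m_ge_2 by fastforce

definition adj_sum :: "(nat \<Rightarrow> 'a::comm_semiring_1) \<Rightarrow> nat \<Rightarrow> 'a" where
  "adj_sum x i = (\<Sum>e\<in>edges_at i. \<Prod>j\<in>e - {i}. x j)"

lemma adj_sum_one: "adj_sum (\<lambda>_. 1 :: 'a::comm_semiring_1) i = of_nat (hg_degree E i)"
  unfolding adj_sum_def hg_degree_eq_card by simp

lemma adj_sum_of_real: "adj_sum (\<lambda>j. complex_of_real (u j)) i = complex_of_real (adj_sum u i)"
  unfolding adj_sum_def by simp

lemma adj_sum_cong: "(\<And>j. j < n \<Longrightarrow> x j = y j) \<Longrightarrow> adj_sum x i = adj_sum y i"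
  unfolding adj_sum_def edges_at_def using edge_subset
  by (intro sum.cong refl prod.cong) (auto simp: subset_iff)

lemma tensor_apply_adj:
  assumes i: "i < n"
  shows "tensor_apply m n (adj_tensor m n E) x i = adj_sum x i"
proof -
  define S where "S = {is \<in> idx (m - 1) n. set (i # is) \<in> E}"
  define h where "h = (\<lambda>is. adj_tensor m n E (i # is) * (\<Prod>j<m - 1. x (is ! j)))"
  have "tensor_apply m n (adj_tensor m n E) x i = sum h (idx (m - 1) n)"
    unfolding tensor_apply_def h_def ..
  also have "\<dots> = sum h S"
    using finite_idx by (intro sum.mono_neutral_right) (auto simp: S_def h_def adj_tensor_def)
  also have "\<dots> = (\<Sum>e\<in>edges_at i. \<Sum>is\<in>{is \<in> S. set (i # is) = e}. h is)"
    using finite_idx finite_edges_at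
    by (intro sum.group[symmetric]) (auto simp: S_def edges_at_def)
  also have "\<dots> = adj_sum x i"
    unfolding adj_sum_def
  proof (rule sum.cong[OF refl])
    fix e assume "e \<in> edges_at i"
    hence eE: "e \<in> E" and ie: "i \<in> e" unfolding edges_at_def by auto
    have perms: "{is \<in> S. set (i # is) = e} = permutations_of_set (e - {i})"
    proof (intro set_eqI iffI)
      fix "is" assume "is \<in> {is \<in> S. set (i # is) = e}"
      hence L: "length is = m - 1" and st: "set (i # is) = e" unfolding S_def idx_def by auto
      have "card (set (i # is)) = length (i # is)" using st card_edge[OF eE] L m_ge_2 by simp
      hence "distinct (i # is)" by (rule card_distinct)
      thus "is \<in> permutations_of_set (e - {i})" using st unfolding permutations_of_set_def by auto
    next
      fix "is" assume "is \<in> permutations_of_set (e - {i})"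
      hence st: "set is = e - {i}" and d: "distinct is" unfolding permutations_of_set_def by auto
      have "length is = m - 1" using distinct_card[OF d] st card_edge_minus[OF eE ie] by simp
      thus "is \<in> {is \<in> S. set (i # is) = e}"
        using st ie eE edge_subset[OF eE] unfolding S_def idx_def by (auto simp: insert_absorb)
    qed
    have "h is = (\<Prod>j\<in>e - {i}. x j) / of_nat (fact (m - 1))"
      if "is \<in> permutations_of_set (e - {i})" for "is"
    proof -
      have st: "set is = e - {i}" and d: "distinct is"
        using that unfolding permutations_of_set_def by auto
      have L: "length is = m - 1" using distinct_card[OF d] st card_edge_minus[OF eE ie] by simp
      have "i # is \<in> idx m n" "set (i # is) = e"
        using L st ie i edge_subset[OF eE] m_ge_2 unfolding idx_def by auto
      thus ?thesis
        using eE st L prod_nth_eq_prod_set[OF d, of x] unfolding h_def adj_tensor_def by simp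
    qed
    thus "(\<Sum>is\<in>{is \<in> S. set (i # is) = e}. h is) = (\<Prod>j\<in>e - {i}. x j)"
      unfolding perms using card_edge_minus[OF eE ie] finite_edge[OF eE] by simp
  qed
  finally show ?thesis .
qed

lemma tensor_apply_deg:
  assumes i: "i < n"
  shows "tensor_apply m n (deg_tensor m n E) x i = of_nat (hg_degree E i) * x i ^ (m - 1)"
proof -
  have "tensor_apply m n (deg_tensor m n E) x i =
      (\<Sum>is\<in>{replicate (m - 1) i}. deg_tensor m n E (i # is) * (\<Prod>j<m - 1. x (is ! j)))"
    unfolding tensor_apply_def using finite_idx i
    by (intro sum.mono_neutral_right)
       (auto simp: idx_def deg_tensor_def replicate_eq_Cons)
  moreover have "i # replicate (m - 1) i = replicate m i" "hd (replicate m i) = i"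
    using m_ge_2 by (simp_all add: replicate_eq_Cons[of i])
  ultimately show ?thesis using i by (auto simp: deg_tensor_def)
qed

lemma tensor_apply_slap:
  "i < n \<Longrightarrow> tensor_apply m n (slap_tensor m n E) x i =
     of_nat (hg_degree E i) * x i ^ (m - 1) + adj_sum x i"
  using tensor_apply_deg tensor_apply_adj
  unfolding tensor_apply_def slap_tensor_def by (simp add: distrib_right sum.distrib)

lemma tensor_apply_lap:
  "i < n \<Longrightarrow> tensor_apply m n (lap_tensor m n E) x i =
     of_nat (hg_degree E i) * x i ^ (m - 1) - adj_sum x i"
  using tensor_apply_deg tensor_apply_adj
  unfolding tensor_apply_def lap_tensor_def by (simp add: left_diff_distrib sum_subtractf)

section \<open>Balanced vectors and stabilizing diagonals\<close>

definition edge_balanced :: "'a::field \<Rightarrow> (nat \<Rightarrow> 'a) \<Rightarrow> bool" where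
  "edge_balanced \<kappa> x \<longleftrightarrow> (\<forall>e\<in>E. \<forall>i\<in>e. (\<Prod>j\<in>e - {i}. x j) = \<kappa> * x i ^ (m - 1))"

lemma edge_balanced_cong:
  "(\<And>i. i < n \<Longrightarrow> x i = y i) \<Longrightarrow> edge_balanced \<kappa> x \<longleftrightarrow> edge_balanced \<kappa> y"
  unfolding edge_balanced_def using edge_subset
  by (intro ball_cong refl arg_cong2[where f = "(=)"] prod.cong) (auto simp: subset_iff)

lemma edge_balanced_mult:
  "edge_balanced \<kappa> x \<Longrightarrow> edge_balanced \<kappa>' y \<Longrightarrow> edge_balanced (\<kappa> * \<kappa>') (\<lambda>i. x i * y i)"
  unfolding edge_balanced_def prod.distrib power_mult_distrib by (simp add: mult_ac)

lemma edge_balanced_divide: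
  "edge_balanced \<kappa> x \<Longrightarrow> edge_balanced \<kappa>' y \<Longrightarrow> edge_balanced (\<kappa> / \<kappa>') (\<lambda>i. x i / y i)"
  unfolding edge_balanced_def prod_dividef power_divide by (simp add: times_divide_times_eq)

lemma edge_balanced_const: "edge_balanced 1 (\<lambda>_. c)"
  unfolding edge_balanced_def using card_edge_minus by simp

lemma adj_sum_mult_edge_balanced:
  assumes "edge_balanced \<kappa> y"
  shows "adj_sum (\<lambda>j. w j * y j) i = \<kappa> * y i ^ (m - 1) * adj_sum w i"
  unfolding adj_sum_def sum_distrib_left
proof (rule sum.cong[OF refl])
  fix e assume "e \<in> edges_at i"
  hence "(\<Prod>j\<in>e - {i}. y j) = \<kappa> * y i ^ (m - 1)"
    using assms unfolding edge_balanced_def edges_at_def by blast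
  thus "(\<Prod>j\<in>e - {i}. w j * y j) = \<kappa> * y i ^ (m - 1) * (\<Prod>j\<in>e - {i}. w j)"
    by (simp add: prod.distrib mult.commute)
qed

definition normalized_diagonal :: "(nat \<Rightarrow> complex) \<Rightarrow> bool" where
  "normalized_diagonal d \<longleftrightarrow> (\<forall>i<n. d i \<noteq> 0) \<and> (\<forall>i\<ge>n. d i = 0) \<and> d 0 = 1"

definition stabilizing_diagonals :: "(nat \<Rightarrow> complex) set" where
  "stabilizing_diagonals = {d. normalized_diagonal d \<and> edge_balanced 1 d}"

lemma stab_condition_iff_edge_balanced:
  assumes d: "\<forall>i<n. d i \<noteq> 0" and c: "c \<noteq> 0"
    and T_edge: "\<forall>is\<in>idx m n. set is \<in> E \<longrightarrow> T is = c"
    and T_off: "\<forall>is\<in>idx m n. set is \<notin> E \<longrightarrow> T is = 0 \<or> (\<exists>i<n. is = replicate m i)"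
  shows "(\<forall>is\<in>idx m n. T is = inverse (d (is ! 0)) ^ (m - 1) * T is * (\<Prod>j\<in>{1..<m}. d (is ! j)))
         \<longleftrightarrow> edge_balanced 1 d" (is "(\<forall>is\<in>_. ?stab is) \<longleftrightarrow> _")
proof -
  have edge_iff: "?stab is \<longleftrightarrow> (\<Prod>v\<in>set is - {is ! 0}. d v) = d (is ! 0) ^ (m - 1)"
    if "is \<in> idx m n" "distinct is" "set is \<in> E" for "is"
  proof -
    have "is ! 0 \<in> set is" "length is = m" using that m_ge_2 unfolding idx_def by auto
    hence "d (is ! 0) \<noteq> 0" using d that(1) unfolding idx_def by auto
    thus ?thesis using c T_edge that prod_tail_eq_prod_set[of "is" d] \<open>length is = m\<close>
      by (auto simp: field_simps power_inverse)
  qed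
  have off_edge: "?stab is" if "is \<in> idx m n" "set is \<notin> E" for "is"
  proof -
    from T_off that consider "T is = 0" | i where "i < n" "is = replicate m i" by blast
    thus ?thesis
    proof cases
      case 2
      have "(\<Prod>j\<in>{1..<m}. d (is ! j)) = (\<Prod>j\<in>{1..<m}. d i)" using 2 by (intro prod.cong) auto
      moreover have "replicate m i ! 0 = i" using m_ge_2 by simp
      ultimately show ?thesis using 2 d by (simp add: power_inverse field_simps)
    qed simp
  qed
  have distinct: "distinct is" if "is \<in> idx m n" "set is \<in> E" for "is"
    using that card_edge[OF that(2)] unfolding idx_def by (simp add: card_distinct)
  have enum: "\<exists>is\<in>idx m n. distinct is \<and> set is = e \<and> is ! 0 = i"
    if e: "e \<in> E" and i: "i \<in> e" for e i
  proof -
    obtain xs where xs: "set xs = e - {i}" "distinct xs"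
      using finite_distinct_list[of "e - {i}"] finite_edge[OF e] by auto
    have "length xs = m - 1" using distinct_card[OF xs(2)] xs(1) card_edge_minus[OF e i] by simp
    moreover have "set (i # xs) = e" "i \<notin> set xs" using xs(1) i by auto
    ultimately show ?thesis using xs(2) edge_subset[OF e] m_ge_2
      by (intro bexI[of _ "i # xs"]) (auto simp: idx_def)
  qed
  show ?thesis
  proof
    assume stab: "\<forall>is\<in>idx m n. ?stab is"
    show "edge_balanced 1 d"
      unfolding edge_balanced_def
    proof (intro ballI)
      fix e i assume "e \<in> E" "i \<in> e"
      then obtain "is" where "is": "is \<in> idx m n" "distinct is" "set is = e" "is ! 0 = i"
        using enum by blast
      hence "(\<Prod>v\<in>set is - {is ! 0}. d v) = d (is ! 0) ^ (m - 1)"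
        using edge_iff stab \<open>e \<in> E\<close> by blast
      thus "(\<Prod>j\<in>e - {i}. d j) = 1 * d i ^ (m - 1)" using "is" by simp
    qed
  next
    assume bal: "edge_balanced 1 d"
    show "\<forall>is\<in>idx m n. ?stab is"
    proof
      fix "is" assume "is": "is \<in> idx m n"
      show "?stab is"
      proof (cases "set is \<in> E")
        case True
        have "is ! 0 \<in> set is" using "is" m_ge_2 unfolding idx_def by auto
        thus ?thesis using bal True edge_iff[OF "is" distinct[OF "is" True] True]
          unfolding edge_balanced_def by (metis mult_1)
      qed (use off_edge "is" in blast)
    qed
  qed
qed

lemma stab_index_eq_card_stabilizing_diagonals:
  assumes "c \<noteq> 0"
    and "\<forall>is\<in>idx m n. set is \<in> E \<longrightarrow> T is = c"
    and "\<forall>is\<in>idx m n. set is \<notin> E \<longrightarrow> T is = 0 \<or> (\<exists>i<n. is = replicate m i)"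
  shows "stab_index m n T = card stabilizing_diagonals"
  unfolding stab_index_def stabilizing_diagonals_def normalized_diagonal_def
  using stab_condition_iff_edge_balanced[OF _ assms] by (intro arg_cong[where f = card] Collect_cong) auto

lemma stab_index_adj: "stab_index m n (adj_tensor m n E) = card stabilizing_diagonals"
  by (rule stab_index_eq_card_stabilizing_diagonals[of "1 / of_nat (fact (m - 1))"])
     (auto simp: adj_tensor_def)

lemma stab_index_slap: "stab_index m n (slap_tensor m n E) = card stabilizing_diagonals"
  by (rule stab_index_eq_card_stabilizing_diagonals[of "1 / of_nat (fact (m - 1))"])
     (auto simp: slap_tensor_def adj_tensor_def deg_tensor_def replicate_not_edge)

lemma stab_index_lap: "stab_index m n (lap_tensor m n E) = card stabilizing_diagonals"
  by (rule stab_index_eq_card_stabilizing_diagonals[of "- 1 / of_nat (fact (m - 1))"])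
     (auto simp: lap_tensor_def adj_tensor_def deg_tensor_def replicate_not_edge)

end

locale connected_hg = uniform_hg +
  assumes connected: "hg_connected n E" and n_pos: "n \<ge> 1"
begin

lemma connected_closed:
  assumes closed: "\<And>e a b. e \<in> E \<Longrightarrow> a \<in> e \<Longrightarrow> b \<in> e \<Longrightarrow> a \<in> P \<Longrightarrow> b \<in> P"
    and "i0 \<in> P" "i0 < n" "v < n"
  shows "v \<in> P"
proof -
  have "(i0, v) \<in> {(a, b). \<exists>e\<in>E. a \<in> e \<and> b \<in> e}\<^sup>*"
    using connected assms unfolding hg_connected_def by auto
  thus ?thesis
  proof (induction rule: rtrancl_induct)
    case (step y z) thus ?case using closed by auto
  qed (use assms in simp)
qed

lemma connected_const:
  assumes "\<And>e a b. e \<in> E \<Longrightarrow> a \<in> e \<Longrightarrow> b \<in> e \<Longrightarrow> g a = g b" and "v < n"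
  shows "g v = g 0"
proof -
  have "v \<in> {v. g v = g 0}"
  proof (rule connected_closed[of _ 0])
    fix e a b assume "e \<in> E" "a \<in> e" "b \<in> e" "a \<in> {v. g v = g 0}"
    thus "b \<in> {v. g v = g 0}" using assms(1)[of e a b] by simp
  qed (use assms n_pos in auto)
  thus ?thesis by simp
qed

lemma edge_balanced_root_of_unity:
  assumes "edge_balanced 1 d" "d 0 = 1" "i < n"
  shows "d i ^ m = 1"
proof -
  have "(\<Prod>j\<in>e. d j) = d a ^ m" if "e \<in> E" "a \<in> e" for e a
    using prod_edge_remove[OF that, of d] assms(1) that m_ge_2
    unfolding edge_balanced_def by (simp add: power_eq_mult_power_pred)
  hence "d i ^ m = d 0 ^ m" by (intro connected_const[OF _ assms(3)]) metis
  thus ?thesis using assms(2) by simp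
qed

lemma edge_balanced_iff_prod_edge:
  assumes "\<forall>i<n. g i ^ m = 1"
  shows "edge_balanced \<kappa> g \<longleftrightarrow> (\<forall>e\<in>E. (\<Prod>j\<in>e. g j) = \<kappa>)"
proof -
  have vertex_iff: "(\<Prod>j\<in>e - {i}. g j) = \<kappa> * g i ^ (m - 1) \<longleftrightarrow> (\<Prod>j\<in>e. g j) = \<kappa>"
    if "e \<in> E" "i \<in> e" for e i
  proof -
    have "g i ^ m = 1" using assms that edge_subset[OF that(1)] by auto
    hence inv: "g i * g i ^ (m - 1) = 1" by (simp only: power_eq_mult_power_pred[symmetric])
    hence "g i \<noteq> 0" by auto
    hence "(\<Prod>j\<in>e - {i}. g j) = \<kappa> * g i ^ (m - 1) \<longleftrightarrow>
        g i * (\<Prod>j\<in>e - {i}. g j) = g i * (\<kappa> * g i ^ (m - 1))"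
      by simp
    also have "g i * (\<kappa> * g i ^ (m - 1)) = \<kappa>" using inv by (simp add: mult.left_commute)
    finally show ?thesis using prod_edge_remove[OF that, of g] by simp
  qed
  show ?thesis
  proof
    assume bal: "edge_balanced \<kappa> g"
    show "\<forall>e\<in>E. (\<Prod>j\<in>e. g j) = \<kappa>"
    proof
      fix e assume e: "e \<in> E"
      then obtain i where "i \<in> e" using edge_nonempty by blast
      thus "(\<Prod>j\<in>e. g j) = \<kappa>" using bal e vertex_iff unfolding edge_balanced_def by blast
    qed
  next
    assume all: "\<forall>e\<in>E. (\<Prod>j\<in>e. g j) = \<kappa>"
    show "edge_balanced \<kappa> g"
      unfolding edge_balanced_def
    proof (intro ballI)
      fix e i assume "e \<in> E" "i \<in> e"
      thus "(\<Prod>j\<in>e - {i}. g j) = \<kappa> * g i ^ (m - 1)" using vertex_iff all by blast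
    qed
  qed
qed

definition edge_sum_kernel :: "(nat \<Rightarrow> int) set" where
  "edge_sum_kernel = {f \<in> residue_vectors m n. \<forall>e\<in>E. int m dvd (\<Sum>v\<in>e. f v)}"

definition root_vector :: "(nat \<Rightarrow> int) \<Rightarrow> nat \<Rightarrow> complex" where
  "root_vector f = (\<lambda>i. if i < n then unit_root m ^ nat (f i) else 0)"

lemma root_vector_edge_balanced_iff:
  assumes f: "f \<in> residue_vectors m n"
  shows "edge_balanced 1 (root_vector f) \<longleftrightarrow> (\<forall>e\<in>E. int m dvd (\<Sum>v\<in>e. f v))"
proof -
  have "\<forall>i<n. root_vector f i ^ m = 1"
    using unit_root_power_power_self m_ge_2 by (simp add: root_vector_def)
  moreover have "(\<Prod>j\<in>e. root_vector f j) = 1 \<longleftrightarrow> int m dvd (\<Sum>v\<in>e. f v)" if e: "e \<in> E" for e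
  proof -
    have f_nonneg: "\<forall>v\<in>e. f v \<ge> 0" using f edge_subset[OF e] unfolding residue_vectors_def by auto
    have "(\<Prod>j\<in>e. root_vector f j) = unit_root m ^ (\<Sum>v\<in>e. nat (f v))"
      using edge_subset[OF e] by (auto simp: root_vector_def power_sum intro!: prod.cong)
    hence "(\<Prod>j\<in>e. root_vector f j) = 1 \<longleftrightarrow> m dvd (\<Sum>v\<in>e. nat (f v))"
      using unit_root_power_eq_1_iff m_ge_2 by simp
    also have "\<dots> \<longleftrightarrow> int m dvd (\<Sum>v\<in>e. f v)"
    proof -
      have "(\<Sum>v\<in>e. f v) = int (\<Sum>v\<in>e. nat (f v))" using f_nonneg by (simp add: of_nat_sum)
      thus ?thesis by (simp only: int_dvd_int_iff)
    qed
    finally show ?thesis .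
  qed
  ultimately show ?thesis by (simp add: edge_balanced_iff_prod_edge)
qed

lemma bij_betw_root_vector:
  "bij_betw root_vector {f \<in> edge_sum_kernel. f 0 = 0} stabilizing_diagonals"
proof (rule bij_betw_imageI)
  show "inj_on root_vector {f \<in> edge_sum_kernel. f 0 = 0}"
  proof (rule inj_onI)
    fix f g assume "f \<in> {f \<in> edge_sum_kernel. f 0 = 0}" "g \<in> {f \<in> edge_sum_kernel. f 0 = 0}"
      and eq: "root_vector f = root_vector g"
    hence fg: "f \<in> residue_vectors m n" "g \<in> residue_vectors m n" unfolding edge_sum_kernel_def by auto
    have "f i = g i" if "i < n" for i
    proof -
      have bounds: "0 \<le> f i" "f i < int m" "0 \<le> g i" "g i < int m"
        using fg that unfolding residue_vectors_def by auto
      have "unit_root m ^ nat (f i) = unit_root m ^ nat (g i)"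
        using fun_cong[OF eq, of i] that by (simp add: root_vector_def)
      hence "nat (f i) = nat (g i)" using bounds by (intro unit_root_power_inj) auto
      thus ?thesis using bounds by simp
    qed
    moreover have "f i = g i" if "\<not> i < n" for i
      using fg that unfolding residue_vectors_def by simp
    ultimately show "f = g" by blast
  qed
  show "root_vector ` {f \<in> edge_sum_kernel. f 0 = 0} = stabilizing_diagonals"
  proof safe
    fix f assume "f \<in> edge_sum_kernel" "f 0 = 0"
    thus "root_vector f \<in> stabilizing_diagonals"
      using root_vector_edge_balanced_iff n_pos
      unfolding stabilizing_diagonals_def normalized_diagonal_def edge_sum_kernel_def
      by (auto simp: root_vector_def)
  next
    fix d assume d: "d \<in> stabilizing_diagonals"
    hence bal: "edge_balanced 1 d" and d0: "d 0 = 1" and d_out: "\<forall>i\<ge>n. d i = 0"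
      unfolding stabilizing_diagonals_def normalized_diagonal_def by auto
    define j where "j i = (SOME j. j < m \<and> d i = unit_root m ^ j)" for i
    have j: "j i < m \<and> d i = unit_root m ^ j i" if "i < n" for i
      unfolding j_def using edge_balanced_root_of_unity[OF bal d0 that] m_ge_2
      by (intro someI_ex[of "\<lambda>j. j < m \<and> d i = unit_root m ^ j"] root_of_unity_eq_unit_root_power) auto
    define f where "f i = (if i < n then int (j i) else 0)" for i
    have f: "f \<in> residue_vectors m n" unfolding f_def residue_vectors_def using j by auto
    have root: "root_vector f = d" using j d_out by (auto simp: root_vector_def f_def)
    have "f 0 = 0"
      using j[of 0] d0 n_pos unit_root_power_inj[of "j 0" m 0] m_ge_2 by (simp add: f_def)
    moreover have "f \<in> edge_sum_kernel"
      using f bal root_vector_edge_balanced_iff[OF f] unfolding root edge_sum_kernel_def by simp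
    ultimately show "d \<in> root_vector ` {f \<in> edge_sum_kernel. f 0 = 0}" using root by blast
  qed
qed

text \<open>Adding a constant to all vertex values preserves the edge sums modulo \<open>m\<close>,
  since every edge has \<open>m\<close> vertices.\<close>
lemma card_edge_sum_kernel: "card edge_sum_kernel = m * card {f \<in> edge_sum_kernel. f 0 = 0}"
proof -
  let ?K0 = "{f \<in> edge_sum_kernel. f 0 = 0}"
  define shift where "shift c f = (\<lambda>i. if i < n then (f i + c) mod int m else 0)" for c f
  have shift_residue: "shift c f \<in> residue_vectors m n" for c f
    using m_ge_2 unfolding shift_def residue_vectors_def by auto
  have shift_kernel: "shift c f \<in> edge_sum_kernel" if f: "f \<in> edge_sum_kernel" for c f
  proof -
    have "int m dvd (\<Sum>v\<in>e. shift c f v)" if e: "e \<in> E" for e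
    proof -
      have "(\<Sum>v\<in>e. shift c f v) = (\<Sum>v\<in>e. (f v + c) mod int m)"
        using edge_subset[OF e] by (intro sum.cong) (auto simp: shift_def)
      hence "(\<Sum>v\<in>e. shift c f v) mod int m = (\<Sum>v\<in>e. f v + c) mod int m"
        by (simp add: mod_sum_eq)
      also have "(\<Sum>v\<in>e. f v + c) = (\<Sum>v\<in>e. f v) + int m * c"
        using card_edge[OF e] by (simp add: sum.distrib)
      finally show ?thesis using f e unfolding edge_sum_kernel_def by (simp add: dvd_eq_mod_eq_0)
    qed
    thus ?thesis using shift_residue unfolding edge_sum_kernel_def by auto
  qed
  have shift_back: "shift (- c) (shift c f) = f" if "f \<in> residue_vectors m n" for c f
  proof
    fix i show "shift (- c) (shift c f) i = f i"
      using that by (cases "i < n") (simp_all add: shift_def residue_vectors_def mod_diff_left_eq)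
  qed
  have shift_at_0: "shift c f 0 = (f 0 + c) mod int m" for c f
    using n_pos by (simp add: shift_def)
  have "bij_betw (\<lambda>(c, f). shift c f) ({0..<int m} \<times> ?K0) edge_sum_kernel"
  proof (rule bij_betw_byWitness[where f' = "\<lambda>f. (f 0, shift (- f 0) f)"])
    show "\<forall>a\<in>{0..<int m} \<times> ?K0. (\<lambda>f. (f 0, shift (- f 0) f)) ((\<lambda>(c, f). shift c f) a) = a"
      using shift_back n_pos by (auto simp: edge_sum_kernel_def shift_at_0)
    show "\<forall>f\<in>edge_sum_kernel. (\<lambda>(c, f). shift c f) (f 0, shift (- f 0) f) = f"
      using shift_back[of _ "- _"] by (simp add: edge_sum_kernel_def)
    show "(\<lambda>(c, f). shift c f) ` ({0..<int m} \<times> ?K0) \<subseteq> edge_sum_kernel"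
      using shift_kernel by auto
    show "(\<lambda>f. (f 0, shift (- f 0) f)) ` edge_sum_kernel \<subseteq> {0..<int m} \<times> ?K0"
      using shift_kernel n_pos by (auto simp: edge_sum_kernel_def residue_vectors_def shift_at_0)
  qed
  hence "card edge_sum_kernel = card ({0..<int m} \<times> ?K0)" by (simp add: bij_betw_same_card)
  thus ?thesis by (simp add: card_cartesian_product)
qed

lemma edge_sum_kernel_eq_kernel_mod:
  assumes enum: "bij_betw enum {0..<k} E"
  shows "edge_sum_kernel = kernel_mod m k n (incidence enum)"
proof -
  have "(\<Sum>v<n. incidence enum a v * f v) = (\<Sum>v\<in>enum a. f v)" if "a < k" for a f
  proof -
    have "enum a \<subseteq> {..<n}" using enum that edge_subset unfolding bij_betw_def by force
    hence "{..<n} \<inter> enum a = enum a" by blast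
    thus ?thesis unfolding incidence_def by (simp add: if_distrib[of "\<lambda>z. z * _"] sum.If_cases)
  qed
  moreover have "E = enum ` {0..<k}" using enum unfolding bij_betw_def by auto
  ultimately show ?thesis
    unfolding edge_sum_kernel_def kernel_mod_def by (auto simp: dvd_eq_mod_eq_0)
qed

lemma card_stabilizing_diagonals:
  assumes "bij_betw enum {0..<k} E" and "has_snf_mod m k n (incidence enum) r d"
  shows "real (card stabilizing_diagonals) = real m powi (int n - 1 - int r) * (\<Prod>i<r. real_of_int (d i))"
proof -
  have r: "r \<le> n" and d: "\<forall>i<r. 1 \<le> d i" using assms(2) unfolding has_snf_mod_def by auto
  have "m * card stabilizing_diagonals = nat (\<Prod>i<r. d i) * m ^ (n - r)"
    using card_edge_sum_kernel bij_betw_same_card[OF bij_betw_root_vector] m_ge_2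
      edge_sum_kernel_eq_kernel_mod[OF assms(1)] card_kernel_mod_snf[OF assms(2)] by simp
  moreover have "real (nat (\<Prod>i<r. d i)) = (\<Prod>i<r. real_of_int (d i))"
  proof -
    have "(\<Prod>i<r. d i) \<ge> 0" using d by (intro prod_nonneg) (auto intro: order.trans[OF zero_le_one])
    thus ?thesis by simp
  qed
  ultimately have "real m * real (card stabilizing_diagonals) = (\<Prod>i<r. real_of_int (d i)) * real m ^ (n - r)"
    by (metis of_nat_mult of_nat_power)
  hence "real (card stabilizing_diagonals) = (\<Prod>i<r. real_of_int (d i)) * real m ^ (n - r) / real m"
    using m_ge_2 by (simp add: field_simps)
  moreover have "real m powi (int n - 1 - int r) = real m ^ (n - r) / real m"
  proof -
    have "real m powi (int n - 1 - int r) = real m powi (int (n - r) - 1)"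
      using r by (simp add: of_nat_diff algebra_simps)
    also have "\<dots> = real m ^ (n - r) / real m"
      using m_ge_2 by (subst power_int_diff) auto
    finally show ?thesis .
  qed
  ultimately show ?thesis by simp
qed

section \<open>A Perron vector of the signless Laplacian\<close>

text \<open>\<open>slap_form x = x \<bullet> Q x\<^sup>m\<^sup>-\<^sup>1\<close>; a maximiser on the nonnegative part of the unit
  \<open>m\<close>-sphere is a Perron vector of \<open>Q\<close>.\<close>
definition slap_form :: "(nat \<Rightarrow> real) \<Rightarrow> real" where
  "slap_form x = (\<Sum>i<n. real (hg_degree E i) * x i ^ m) + real m * (\<Sum>e\<in>E. \<Prod>j\<in>e. x j)"

definition pow_sum :: "(nat \<Rightarrow> real) \<Rightarrow> real" where
  "pow_sum x = (\<Sum>i<n. x i ^ m)"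

definition nonneg_sphere :: "(nat \<Rightarrow> real) set" where
  "nonneg_sphere = {x. (\<forall>i<n. 0 \<le> x i \<and> x i \<le> 1) \<and> (\<forall>i\<ge>n. x i = 0) \<and> pow_sum x = 1}"

lemma continuous_on_slap_form: "continuous_on S slap_form"
  unfolding slap_form_def
  by (intro continuous_intros continuous_on_product_then_coordinatewise continuous_on_id)

lemma continuous_on_pow_sum: "continuous_on S pow_sum"
  unfolding pow_sum_def
  by (intro continuous_intros continuous_on_product_then_coordinatewise continuous_on_id)

lemma compact_nonneg_sphere: "compact nonneg_sphere"
proof -
  define S where "S = (\<lambda>i::nat. if i < n then {0..1::real} else {0})"
  have "compactin (product_topology (\<lambda>_. euclidean) UNIV) (PiE UNIV S)"
    by (subst compactin_PiE) (auto simp: S_def)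
  hence "compact (PiE UNIV S)" by (simp add: euclidean_product_topology)
  moreover have "nonneg_sphere = PiE UNIV S \<inter> {x. pow_sum x = 1}"
    unfolding nonneg_sphere_def S_def by (auto simp: PiE_iff split: if_splits)
  moreover have "closed {x. pow_sum x = 1}"
    using continuous_on_pow_sum by (intro closed_Collect_eq) (auto intro: continuous_intros)
  ultimately show ?thesis by (simp add: compact_Int_closed)
qed

lemma nonneg_sphere_nonempty: "(\<lambda>i. if i = 0 then 1 else 0) \<in> nonneg_sphere"
proof -
  have "pow_sum (\<lambda>i. if i = 0 then 1 else 0) = (\<Sum>i<n. if i = 0 then 1 else 0)"
    unfolding pow_sum_def using m_ge_2 by (intro sum.cong) auto
  also have "\<dots> = 1" using n_pos by simp
  finally show ?thesis unfolding nonneg_sphere_def using n_pos by auto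
qed

lemma slap_form_maximizer_exists: "\<exists>x\<in>nonneg_sphere. \<forall>y\<in>nonneg_sphere. slap_form y \<le> slap_form x"
  using continuous_attains_sup[OF compact_nonneg_sphere _ continuous_on_slap_form]
    nonneg_sphere_nonempty by blast

lemma slap_form_scale: "slap_form (\<lambda>i. c * x i) = c ^ m * slap_form x"
proof -
  have "(\<Sum>e\<in>E. \<Prod>j\<in>e. c * x j) = c ^ m * (\<Sum>e\<in>E. \<Prod>j\<in>e. x j)"
    using card_edge by (simp add: prod.distrib sum_distrib_left)
  thus ?thesis unfolding slap_form_def
    by (simp add: power_mult_distrib sum_distrib_left distrib_left mult_ac)
qed

lemma pow_sum_scale: "pow_sum (\<lambda>i. c * x i) = c ^ m * pow_sum x"
  unfolding pow_sum_def by (simp add: power_mult_distrib sum_distrib_left)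

lemma nonneg_sphere_nonneg: "x \<in> nonneg_sphere \<Longrightarrow> 0 \<le> x i"
  unfolding nonneg_sphere_def by (cases "i < n") auto

text \<open>Homogeneity turns the maximum on the sphere into a bound on the whole nonnegative cone.\<close>
lemma slap_form_le_max:
  assumes x: "x \<in> nonneg_sphere" and max: "\<forall>y\<in>nonneg_sphere. slap_form y \<le> slap_form x"
    and y: "\<forall>i. 0 \<le> y i" "\<forall>i\<ge>n. y i = 0"
  shows "slap_form y \<le> slap_form x * pow_sum y"
proof (cases "pow_sum y = 0")
  case True
  have "y i = 0" for i
  proof (cases "i < n")
    case True
    have "\<forall>j\<in>{..<n}. y j ^ m = 0"
      using \<open>pow_sum y = 0\<close> y by (subst sum_nonneg_eq_0_iff[symmetric]) (auto simp: pow_sum_def)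
    thus ?thesis using True m_ge_2 by auto
  qed (use y in auto)
  hence "slap_form y = 0" unfolding slap_form_def using m_ge_2
    by (simp add: card_edge power_0_left)
  thus ?thesis using True by simp
next
  case False
  hence N: "pow_sum y > 0" using y unfolding pow_sum_def by (simp add: sum_nonneg order_less_le)
  define c where "c = root m (pow_sum y)"
  have c: "c > 0" "c ^ m = pow_sum y" unfolding c_def using N m_ge_2 by (auto simp: real_root_gt_zero)
  define y' where "y' = (\<lambda>i. inverse c * y i)"
  have y'_nonneg: "0 \<le> y' i" for i unfolding y'_def using y c by simp
  have "inverse c ^ m = inverse (pow_sum y)" using c by (simp add: power_inverse)
  hence scale: "pow_sum y' = 1" "slap_form y' = slap_form y / pow_sum y"
    unfolding y'_def pow_sum_scale slap_form_scale using N by (simp_all add: field_simps)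
  have "y' i \<le> 1" if "i < n" for i
  proof -
    have "y' i ^ m \<le> pow_sum y'"
      unfolding pow_sum_def using that y'_nonneg by (intro member_le_sum) auto
    thus ?thesis using scale m_ge_2 y'_nonneg power_le_one_iff[of "y' i" m] by auto
  qed
  hence "y' \<in> nonneg_sphere"
    unfolding nonneg_sphere_def using y'_nonneg scale y by (auto simp: y'_def)
  hence "slap_form y / pow_sum y \<le> slap_form x" using max scale by auto
  thus ?thesis using N by (simp add: pos_divide_le_eq)
qed

lemma slap_form_increase:
  assumes x: "\<forall>j. 0 \<le> x j" and xy: "\<forall>j. x j \<le> y j"
    and e: "e \<in> E" "j0 \<in> e" and x_e: "(\<Prod>j\<in>e. x j) = 0"
    and \<delta>: "0 \<le> \<delta>" "\<delta> \<le> y j0" and \<epsilon>: "0 \<le> \<epsilon>" "\<forall>j\<in>e. \<epsilon> \<le> y j"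
  shows "slap_form x + real m * (\<delta> * \<epsilon> ^ (m - 1)) \<le> slap_form y"
proof -
  have y: "0 \<le> y j" for j using x xy order.trans by blast
  have "\<delta> * \<epsilon> ^ (m - 1) \<le> y j0 * (\<Prod>j\<in>e - {j0}. y j)"
  proof (rule mult_mono)
    have "(\<Prod>j\<in>e - {j0}. \<epsilon>) \<le> (\<Prod>j\<in>e - {j0}. y j)" using \<epsilon> by (intro prod_mono) auto
    thus "\<epsilon> ^ (m - 1) \<le> (\<Prod>j\<in>e - {j0}. y j)" using card_edge_minus[OF e] by simp
  qed (use \<delta> y \<epsilon> in \<open>auto intro: prod_nonneg\<close>)
  also have "\<dots> = (\<Prod>j\<in>e. y j)" using prod_edge_remove[OF e, of y] by simp
  finally have "(\<Sum>f\<in>E. \<Prod>j\<in>f. x j) + \<delta> * \<epsilon> ^ (m - 1)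
      \<le> (\<Prod>j\<in>e. y j) + (\<Sum>f\<in>E - {e}. \<Prod>j\<in>f. x j)"
    using x_e finite_edges e by (simp add: sum.remove)
  also have "\<dots> \<le> (\<Prod>j\<in>e. y j) + (\<Sum>f\<in>E - {e}. \<Prod>j\<in>f. y j)"
    using x xy by (intro add_left_mono sum_mono prod_mono) auto
  also have "\<dots> = (\<Sum>f\<in>E. \<Prod>j\<in>f. y j)" using finite_edges e by (simp add: sum.remove)
  finally have "real m * (\<Sum>f\<in>E. \<Prod>j\<in>f. x j) + real m * (\<delta> * \<epsilon> ^ (m - 1))
      \<le> real m * (\<Sum>f\<in>E. \<Prod>j\<in>f. y j)"
    unfolding distrib_left[symmetric] by (rule mult_left_mono) auto
  moreover have "(\<Sum>i<n. real (hg_degree E i) * x i ^ m) \<le> (\<Sum>i<n. real (hg_degree E i) * y i ^ m)"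
    using x xy by (intro sum_mono mult_left_mono power_mono) auto
  ultimately show ?thesis unfolding slap_form_def by simp
qed

text \<open>Raising all zero coordinates to \<open>\<epsilon>\<close> gains order \<open>\<epsilon>\<^sup>m\<^sup>-\<^sup>1\<close> in \<open>slap_form\<close>
  along an edge joining a zero and a positive vertex, but costs only order \<open>\<epsilon>\<^sup>m\<close> in the norm.\<close>
lemma slap_form_maximizer_pos:
  assumes x: "x \<in> nonneg_sphere" and max: "\<forall>y\<in>nonneg_sphere. slap_form y \<le> slap_form x"
    and i: "i < n"
  shows "x i > 0"
proof (rule ccontr)
  assume "\<not> x i > 0"
  have x_nonneg: "0 \<le> x j" for j using nonneg_sphere_nonneg[OF x] .
  have x_out: "\<forall>j\<ge>n. x j = 0" and x_norm: "pow_sum x = 1" using x unfolding nonneg_sphere_def by auto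
  define Z where "Z = {j. j < n \<and> x j = 0}"
  define W where "W = {j. j < n \<and> x j > 0}"
  have WZ: "j \<in> W \<or> j \<in> Z" if "j < n" for j
    using that x_nonneg[of j] unfolding W_def Z_def by auto
  have "i \<in> Z" using i \<open>\<not> x i > 0\<close> x_nonneg[of i] unfolding Z_def by auto
  have "W \<noteq> {}"
  proof
    assume "W = {}"
    hence "pow_sum x = 0" unfolding pow_sum_def using WZ m_ge_2 by (auto simp: Z_def)
    thus False using x_norm by simp
  qed
  then obtain w where "w \<in> W" by auto
  obtain e j0 z0 where e: "e \<in> E" "j0 \<in> e" "z0 \<in> e" and "j0 \<in> W" "z0 \<in> Z"
  proof (rule ccontr)
    assume no_edge: "\<not> thesis"
    have "i \<in> W"
    proof (rule connected_closed[of W w i])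
      fix e a b assume "e \<in> E" "a \<in> e" "b \<in> e" "a \<in> W"
      have "b < n" using edge_subset[OF \<open>e \<in> E\<close>] \<open>b \<in> e\<close> by auto
      show "b \<in> W"
      proof (rule ccontr)
        assume "b \<notin> W"
        hence "b \<in> Z" using WZ[OF \<open>b < n\<close>] by blast
        thus False using that[OF \<open>e \<in> E\<close> \<open>a \<in> e\<close> \<open>b \<in> e\<close> \<open>a \<in> W\<close>] no_edge by blast
      qed
    qed (use \<open>w \<in> W\<close> i in \<open>auto simp: W_def\<close>)
    thus False using \<open>i \<in> Z\<close> unfolding W_def Z_def by auto
  qed
  define \<delta> where "\<delta> = Min (x ` W)"
  have "finite W" unfolding W_def by auto
  hence \<delta>: "0 < \<delta>" "\<And>j. j \<in> W \<Longrightarrow> \<delta> \<le> x j"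
    using \<open>W \<noteq> {}\<close> unfolding \<delta>_def W_def by auto
  define lam where "lam = slap_form x"
  have "0 \<le> lam" unfolding lam_def slap_form_def using x_nonneg
    by (auto intro!: add_nonneg_nonneg sum_nonneg mult_nonneg_nonneg prod_nonneg)
  then obtain \<epsilon> where \<epsilon>: "0 < \<epsilon>" "\<epsilon> \<le> \<delta>" "lam * card Z * \<epsilon> < real m * \<delta>"
    using exists_small_mult_less[of "real m * \<delta>" \<delta> "lam * card Z"] \<delta> m_ge_2 by auto
  define y where "y j = (if j \<in> Z then \<epsilon> else x j)" for j
  have y_ge: "\<epsilon> \<le> y j" if "j < n" for j
    using WZ[OF that] \<delta> \<epsilon> unfolding y_def by force
  have xy: "x j \<le> y j" for j unfolding y_def Z_def using \<epsilon> by auto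
  have "y j = 0" if "j \<ge> n" for j using x_out that unfolding y_def Z_def by auto
  hence "slap_form y \<le> lam * pow_sum y"
    unfolding lam_def using slap_form_le_max[OF x max] x_nonneg xy order.trans by blast
  also have "pow_sum y = 1 + card Z * \<epsilon> ^ m"
  proof -
    have "pow_sum y = (\<Sum>j<n. x j ^ m + (if j \<in> Z then \<epsilon> ^ m else 0))"
      unfolding pow_sum_def y_def using m_ge_2 by (intro sum.cong) (auto simp: Z_def)
    also have "\<dots> = pow_sum x + (\<Sum>j\<in>Z. \<epsilon> ^ m)"
      unfolding pow_sum_def sum.distrib using sum.inter_filter[of "{..<n}" "\<lambda>_. \<epsilon> ^ m" "\<lambda>j. j \<in> Z"]
      by (simp add: Z_def)
    finally show ?thesis using x_norm by simp
  qed
  finally have y_le: "slap_form y \<le> lam * (1 + card Z * \<epsilon> ^ m)" .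
  have "slap_form x + real m * (\<delta> * \<epsilon> ^ (m - 1)) \<le> slap_form y"
  proof (rule slap_form_increase[OF _ _ e(1,2)])
    show "(\<Prod>j\<in>e. x j) = 0"
      using \<open>z0 \<in> Z\<close> e(3) finite_edge[OF e(1)] by (auto simp: Z_def prod_zero_iff)
    show "\<delta> \<le> y j0" using \<delta>(2)[OF \<open>j0 \<in> W\<close>] xy[of j0] by simp
    show "\<forall>j\<in>e. \<epsilon> \<le> y j" using y_ge edge_subset[OF e(1)] by auto
  qed (use x_nonneg xy \<delta> \<epsilon> in auto)
  hence "lam + real m * (\<delta> * \<epsilon> ^ (m - 1)) \<le> lam * (1 + card Z * \<epsilon> ^ m)"
    using y_le unfolding lam_def by simp
  hence "(real m * \<delta>) * \<epsilon> ^ (m - 1) \<le> (lam * card Z * \<epsilon>) * \<epsilon> ^ (m - 1)"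
    using power_eq_mult_power_pred[of \<epsilon>] by (simp add: algebra_simps)
  hence "real m * \<delta> \<le> lam * card Z * \<epsilon>" using \<epsilon> by (simp add: mult_le_cancel_right)
  thus False using \<epsilon> by simp
qed

lemma pow_sum_fun_upd: "i < n \<Longrightarrow> pow_sum (x(i := s)) = s ^ m + pow_sum (x(i := 0))"
  unfolding pow_sum_def using m_ge_2 by (simp add: sum.remove[of "{..<n}" i])

lemma slap_form_fun_upd:
  assumes "i < n"
  shows "slap_form (x(i := s)) = real (hg_degree E i) * s ^ m + real m * (s * adj_sum x i) + slap_form (x(i := 0))"
proof -
  have edges: "(\<Sum>e\<in>E. \<Prod>j\<in>e. (x(i := s)) j) = s * adj_sum x i + (\<Sum>e\<in>E - edges_at i. \<Prod>j\<in>e. x j)" for s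
  proof -
    have "(\<Sum>e\<in>E. \<Prod>j\<in>e. (x(i := s)) j)
        = (\<Sum>e\<in>E - edges_at i. \<Prod>j\<in>e. (x(i := s)) j) + (\<Sum>e\<in>edges_at i. \<Prod>j\<in>e. (x(i := s)) j)"
      using finite_edges by (intro sum.subset_diff) (auto simp: edges_at_def)
    also have "(\<Sum>e\<in>edges_at i. \<Prod>j\<in>e. (x(i := s)) j) = (\<Sum>e\<in>edges_at i. s * (\<Prod>j\<in>e - {i}. x j))"
    proof (rule sum.cong[OF refl])
      fix e assume "e \<in> edges_at i"
      hence "e \<in> E" "i \<in> e" unfolding edges_at_def by auto
      thus "(\<Prod>j\<in>e. (x(i := s)) j) = s * (\<Prod>j\<in>e - {i}. x j)"
        using prod_edge_remove[of e i "x(i := s)"] by simp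
    qed
    also have "(\<Sum>e\<in>E - edges_at i. \<Prod>j\<in>e. (x(i := s)) j) = (\<Sum>e\<in>E - edges_at i. \<Prod>j\<in>e. x j)"
      by (intro sum.cong refl prod.cong) (auto simp: edges_at_def)
    finally show ?thesis by (simp add: adj_sum_def sum_distrib_left)
  qed
  have degrees: "(\<Sum>j<n. real (hg_degree E j) * (x(i := s)) j ^ m)
      = real (hg_degree E i) * s ^ m + (\<Sum>j\<in>{..<n} - {i}. real (hg_degree E j) * x j ^ m)" for s
    using assms by (simp add: sum.remove[of "{..<n}" i])
  show ?thesis unfolding slap_form_def edges degrees using m_ge_2 by (simp add: algebra_simps)
qed

lemma slap_form_maximizer_eigen:
  assumes x: "x \<in> nonneg_sphere" and max: "\<forall>y\<in>nonneg_sphere. slap_form y \<le> slap_form x"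
    and i: "i < n"
  shows "real (hg_degree E i) * x i ^ (m - 1) + adj_sum x i = slap_form x * x i ^ (m - 1)"
proof -
  define lam where "lam = slap_form x"
  define P where "P s = lam * pow_sum (x(i := s)) - slap_form (x(i := s))" for s
  have P_nonneg: "P s \<ge> 0" if "s \<ge> 0" for s
  proof -
    have "\<forall>j. 0 \<le> (x(i := s)) j" using nonneg_sphere_nonneg[OF x] that by simp
    moreover have "\<forall>j\<ge>n. (x(i := s)) j = 0" using x i unfolding nonneg_sphere_def by auto
    ultimately show ?thesis using slap_form_le_max[OF x max] unfolding P_def lam_def by simp
  qed
  have "P (x i) = 0" using x unfolding P_def lam_def nonneg_sphere_def by simp
  have P_eq: "P = (\<lambda>s. lam * (s ^ m + pow_sum (x(i := 0)))
      - (real (hg_degree E i) * s ^ m + real m * (s * adj_sum x i) + slap_form (x(i := 0))))"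
  proof
    fix s show "P s = lam * (s ^ m + pow_sum (x(i := 0)))
      - (real (hg_degree E i) * s ^ m + real m * (s * adj_sum x i) + slap_form (x(i := 0)))"
      unfolding P_def pow_sum_fun_upd[OF i, of x s] slap_form_fun_upd[OF i, of x s] ..
  qed
  have deriv: "(P has_real_derivative
      lam * (real m * x i ^ (m - 1)) - (real (hg_degree E i) * (real m * x i ^ (m - 1)) + real m * adj_sum x i))
      (at (x i))"
    unfolding P_eq by (auto intro!: derivative_eq_intros)
  have local_min: "\<forall>s. \<bar>x i - s\<bar> < x i \<longrightarrow> P (x i) \<le> P s"
    using P_nonneg \<open>P (x i) = 0\<close> by (smt (verit))
  have "lam * (real m * x i ^ (m - 1))
      - (real (hg_degree E i) * (real m * x i ^ (m - 1)) + real m * adj_sum x i) = 0"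
    by (rule DERIV_local_min[OF deriv slap_form_maximizer_pos[OF x max i] local_min])
  hence "real m * (lam * x i ^ (m - 1) - (real (hg_degree E i) * x i ^ (m - 1) + adj_sum x i)) = 0"
    by (simp add: algebra_simps)
  thus ?thesis using m_ge_2 unfolding lam_def by simp
qed

lemma perron_vector:
  "\<exists>u \<mu>. (\<forall>i<n. u i > 0) \<and> (\<forall>i\<ge>n. u i = 0) \<and> u 0 = 1 \<and>
     (\<forall>i<n. real (hg_degree E i) * u i ^ (m - 1) + adj_sum u i = \<mu> * u i ^ (m - 1))"
proof -
  obtain x where x: "x \<in> nonneg_sphere" and max: "\<forall>y\<in>nonneg_sphere. slap_form y \<le> slap_form x"
    using slap_form_maximizer_exists by blast
  have pos: "x i > 0" if "i < n" for i using slap_form_maximizer_pos[OF x max that] .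
  define c where "c = inverse (x 0)"
  define u where "u j = c * x j" for j
  have adj: "adj_sum u i = c ^ (m - 1) * adj_sum x i" for i
    unfolding adj_sum_def u_def sum_distrib_left using card_edge_minus
    by (intro sum.cong) (auto simp: edges_at_def prod.distrib)
  have "real (hg_degree E i) * u i ^ (m - 1) + adj_sum u i = slap_form x * u i ^ (m - 1)" if "i < n" for i
  proof -
    have "real (hg_degree E i) * u i ^ (m - 1) + adj_sum u i
        = c ^ (m - 1) * (real (hg_degree E i) * x i ^ (m - 1) + adj_sum x i)"
      unfolding adj u_def power_mult_distrib by (simp add: algebra_simps)
    also have "\<dots> = slap_form x * u i ^ (m - 1)"
      unfolding slap_form_maximizer_eigen[OF x max that] u_def power_mult_distrib by simp
    finally show ?thesis .
  qed
  moreover have "u 0 = 1" "\<forall>i<n. u i > 0" "\<forall>i\<ge>n. u i = 0"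
  proof -
    have "x 0 \<noteq> 0" using pos[of 0] n_pos by simp
    thus "u 0 = 1" "\<forall>i<n. u i > 0" "\<forall>i\<ge>n. u i = 0"
      using pos pos[of 0] n_pos x unfolding u_def c_def nonneg_sphere_def by auto
  qed
  ultimately show ?thesis by blast
qed

lemma slap_eigenvalue_norm_le:
  assumes u: "\<forall>i<n. 0 < u i"
    and perron: "\<forall>i<n. real (hg_degree E i) * u i ^ (m - 1) + adj_sum u i = \<mu> * u i ^ (m - 1)"
    and y: "eigenpair m n (slap_tensor m n E) lam y"
  shows "cmod lam \<le> \<mu>"
proof -
  obtain t i where t: "0 < t" "i < n" "cmod (y i) = t * u i" "\<forall>j<n. cmod (y j) \<le> t * u j"
    using max_ratio_attained[OF u] y unfolding eigenpair_def by metis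
  have "cmod lam * (t * u i) ^ (m - 1) = cmod (lam * y i ^ (m - 1))"
    using t(3) by (simp add: norm_mult norm_power)
  also have "lam * y i ^ (m - 1) = of_nat (hg_degree E i) * y i ^ (m - 1) + adj_sum y i"
    using y t(2) tensor_apply_slap unfolding eigenpair_def by simp
  also have "cmod \<dots> \<le> real (hg_degree E i) * cmod (y i) ^ (m - 1) + adj_sum (\<lambda>j. cmod (y j)) i"
  proof -
    have "cmod (adj_sum y i) \<le> adj_sum (\<lambda>j. cmod (y j)) i"
      unfolding adj_sum_def by (rule order_trans[OF norm_sum]) (simp add: prod_norm)
    thus ?thesis by (intro order_trans[OF norm_triangle_ineq]) (simp add: norm_mult norm_power)
  qed
  also have "\<dots> \<le> real (hg_degree E i) * (t * u i) ^ (m - 1) + adj_sum (\<lambda>j. t * u j) i"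
  proof (intro add_mono mult_left_mono power_mono)
    show "adj_sum (\<lambda>j. cmod (y j)) i \<le> adj_sum (\<lambda>j. t * u j) i"
      unfolding adj_sum_def edges_at_def using t(4) edge_subset
      by (intro sum_mono prod_mono) (auto simp: subset_iff)
  qed (use t(3) u[rule_format, OF t(2)] t(1) in auto)
  also have "adj_sum (\<lambda>j. t * u j) i = t ^ (m - 1) * adj_sum u i"
    unfolding adj_sum_def sum_distrib_left using card_edge_minus
    by (intro sum.cong) (auto simp: edges_at_def prod.distrib)
  also have "real (hg_degree E i) * (t * u i) ^ (m - 1) + t ^ (m - 1) * adj_sum u i
      = t ^ (m - 1) * (real (hg_degree E i) * u i ^ (m - 1) + adj_sum u i)"
    by (simp add: power_mult_distrib algebra_simps)
  also have "\<dots> = \<mu> * (t * u i) ^ (m - 1)"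
    using perron t(2) by (simp add: power_mult_distrib)
  finally show ?thesis using t u by (simp add: mult_le_cancel_right)
qed

lemma spectral_radius_slap:
  assumes u: "\<forall>i<n. 0 < u i" "\<forall>i\<ge>n. u i = 0"
    and perron: "\<forall>i<n. real (hg_degree E i) * u i ^ (m - 1) + adj_sum u i = \<mu> * u i ^ (m - 1)"
  shows "spectral_radius m n (slap_tensor m n E) = \<mu>"
  unfolding spectral_radius_def
proof (rule cSup_eq_maximum)
  have "tensor_apply m n (slap_tensor m n E) (\<lambda>j. complex_of_real (u j)) i
      = complex_of_real \<mu> * complex_of_real (u i) ^ (m - 1)" if "i < n" for i
  proof -
    have "complex_of_real (real (hg_degree E i) * u i ^ (m - 1) + adj_sum u i)
        = complex_of_real (\<mu> * u i ^ (m - 1))"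
      using perron that by simp
    thus ?thesis by (simp add: tensor_apply_slap[OF that] adj_sum_of_real)
  qed
  hence "eigenpair m n (slap_tensor m n E) (complex_of_real \<mu>) (\<lambda>j. complex_of_real (u j))"
    unfolding eigenpair_def using u n_pos by (auto intro!: exI[of _ 0])
  moreover have "0 \<le> \<mu>"
    using slap_eigenvalue_norm_le[OF u(1) perron calculation] by simp
  ultimately show "\<mu> \<in> {cmod lam |lam. tensor_eigenvalue m n (slap_tensor m n E) lam}"
    unfolding tensor_eigenvalue_def by (auto intro!: exI[of _ "complex_of_real \<mu>"])
qed (use slap_eigenvalue_norm_le[OF u(1) perron] in \<open>auto simp: tensor_eigenvalue_def\<close>)

section \<open>Eigenvarieties\<close>

text \<open>The modulus of \<open>x/u\<close> is maximal at some vertex; there the equation exhibits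
  \<open>\<kappa> (x/u)\<^sub>i\<^sup>m\<^sup>-\<^sup>1\<close> as a positive weighted mean of the edge products of \<open>x/u\<close>, all of modulus
  at most that of \<open>\<kappa> (x/u)\<^sub>i\<^sup>m\<^sup>-\<^sup>1\<close>, which forces equality on every edge; connectivity spreads the
  maximum to all vertices.\<close>
lemma eigen_equation_edge_balanced:
  fixes u :: "nat \<Rightarrow> real" and x :: "nat \<Rightarrow> complex"
  assumes u: "\<forall>i<n. 0 < u i" and \<kappa>: "cmod \<kappa> = 1" and x: "\<exists>i<n. x i \<noteq> 0"
    and eq: "\<forall>i<n. complex_of_real (u i) ^ (m - 1) * adj_sum x i
                  = \<kappa> * adj_sum (\<lambda>j. complex_of_real (u j)) i * x i ^ (m - 1)"
  shows "(\<forall>i<n. x i \<noteq> 0) \<and> edge_balanced \<kappa> (\<lambda>i. x i / complex_of_real (u i))"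
proof -
  define y where "y i = x i / complex_of_real (u i)" for i
  obtain t i0 where t: "0 < t" "i0 < n" "cmod (x i0) = t * u i0" "\<forall>j<n. cmod (x j) \<le> t * u j"
    using max_ratio_attained[OF u x] by blast
  have cmod_y: "cmod (y j) = cmod (x j) / u j" if "j < n" for j
    using u[rule_format, OF that] unfolding y_def by (simp add: norm_divide)
  have y_le: "cmod (y j) \<le> t" if "j < n" for j
    using t(4) u that by (simp add: cmod_y divide_le_eq)
  have x_eq: "x j = complex_of_real (u j) * y j" if "j < n" for j
    using u[rule_format, OF that] unfolding y_def by simp
  have in_range: "e \<subseteq> {..<n}" if "e \<in> edges_at i" for e i
    using that edge_subset unfolding edges_at_def by force
  have aligned: "(\<Prod>j\<in>e - {i}. y j) = \<kappa> * y i ^ (m - 1)"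
    if i: "i < n" "cmod (y i) = t" and e: "e \<in> edges_at i" for i e
  proof (rule weighted_mean_eq_boundary[OF finite_edges_at _ _ _ e])
    show "\<forall>f\<in>edges_at i. 0 < (\<Prod>j\<in>f - {i}. u j)"
      using u in_range by (fastforce intro: prod_pos)
    show "\<forall>f\<in>edges_at i. cmod (\<Prod>j\<in>f - {i}. y j) \<le> cmod (\<kappa> * y i ^ (m - 1))"
    proof
      fix f assume f: "f \<in> edges_at i"
      hence "f \<in> E" "i \<in> f" unfolding edges_at_def by auto
      have "cmod (\<Prod>j\<in>f - {i}. y j) = (\<Prod>j\<in>f - {i}. cmod (y j))" by (rule prod_norm[symmetric])
      also have "\<dots> \<le> (\<Prod>j\<in>f - {i}. t)"
        using y_le in_range[OF f] by (intro prod_mono) auto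
      also have "\<dots> = cmod (\<kappa> * y i ^ (m - 1))"
        using card_edge_minus[OF \<open>f \<in> E\<close> \<open>i \<in> f\<close>] i \<kappa> by (simp add: norm_mult norm_power)
      finally show "cmod (\<Prod>j\<in>f - {i}. y j) \<le> cmod (\<kappa> * y i ^ (m - 1))" .
    qed
    have "(\<Sum>f\<in>edges_at i. complex_of_real (\<Prod>j\<in>f - {i}. u j) * (\<Prod>j\<in>f - {i}. y j)) = adj_sum x i"
      unfolding adj_sum_def
    proof (rule sum.cong[OF refl])
      fix f assume f: "f \<in> edges_at i"
      have "(\<Prod>j\<in>f - {i}. x j) = (\<Prod>j\<in>f - {i}. complex_of_real (u j) * y j)"
        using x_eq in_range[OF f] by (intro prod.cong) auto
      thus "complex_of_real (\<Prod>j\<in>f - {i}. u j) * (\<Prod>j\<in>f - {i}. y j) = (\<Prod>j\<in>f - {i}. x j)"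
        by (simp add: prod.distrib)
    qed
    also have "\<dots> = \<kappa> * adj_sum (\<lambda>j. complex_of_real (u j)) i * y i ^ (m - 1)"
    proof -
      have "complex_of_real (u i) ^ (m - 1) \<noteq> 0" using u[rule_format, OF i(1)] by simp
      moreover have "complex_of_real (u i) ^ (m - 1) * adj_sum x i
          = complex_of_real (u i) ^ (m - 1) * (\<kappa> * adj_sum (\<lambda>j. complex_of_real (u j)) i * y i ^ (m - 1))"
        using eq x_eq i by (simp add: power_mult_distrib mult_ac)
      ultimately show ?thesis by (rule mult_left_cancel[THEN iffD1])
    qed
    finally show "(\<Sum>f\<in>edges_at i. complex_of_real (\<Prod>j\<in>f - {i}. u j) * (\<Prod>j\<in>f - {i}. y j))
        = complex_of_real (\<Sum>f\<in>edges_at i. \<Prod>j\<in>f - {i}. u j) * (\<kappa> * y i ^ (m - 1))"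
      by (simp add: adj_sum_def mult_ac)
  qed
  have spread: "cmod (y b) = t" if "e \<in> E" "a \<in> e" "b \<in> e" "cmod (y a) = t" for e a b
  proof (cases "b = a")
    case False
    have "e \<in> edges_at a" using that unfolding edges_at_def by simp
    hence "e \<subseteq> {..<n}" by (rule in_range)
    hence "a < n" using that(2) by auto
    have "(\<Prod>j\<in>e - {a}. cmod (y j)) = cmod (\<Prod>j\<in>e - {a}. y j)" by (rule prod_norm)
    also have "\<dots> = cmod (\<kappa> * y a ^ (m - 1))"
      using aligned[OF \<open>a < n\<close> that(4) \<open>e \<in> edges_at a\<close>] by simp
    also have "\<dots> = t ^ card (e - {a})"
      using \<kappa> that(4) card_edge_minus[OF that(1,2)] by (simp add: norm_mult norm_power)
    finally have "(\<Prod>j\<in>e - {a}. cmod (y j)) = t ^ card (e - {a})" .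
    show ?thesis
    proof (rule prod_eq_power_imp_eq[of "e - {a}" b "\<lambda>j. cmod (y j)" t])
      show "finite (e - {a})" using finite_edge[OF that(1)] by simp
      show "b \<in> e - {a}" using False that(3) by simp
      show "\<forall>j\<in>e - {a}. 0 \<le> cmod (y j) \<and> cmod (y j) \<le> t" using y_le \<open>e \<subseteq> {..<n}\<close> by auto
    qed fact+
  qed (use that in simp)
  have all: "cmod (y v) = t" if "v < n" for v
  proof -
    have "cmod (y i0) = t" using cmod_y[OF t(2)] t(3) u[rule_format, OF t(2)] by simp
    hence "v \<in> {v. cmod (y v) = t}"
      using connected_closed[of "{v. cmod (y v) = t}" i0 v] spread t(2) that by blast
    thus ?thesis by simp
  qed
  have "x v \<noteq> 0" if "v < n" for v
    using all[OF that] t(1) x_eq[OF that] u[rule_format, OF that] by auto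
  moreover have "edge_balanced \<kappa> y"
    unfolding edge_balanced_def
  proof (intro ballI)
    fix e i assume "e \<in> E" "i \<in> e"
    hence "i < n" "e \<in> edges_at i" using edge_subset[of e] by (auto simp: edges_at_def)
    thus "(\<Prod>j\<in>e - {i}. y j) = \<kappa> * y i ^ (m - 1)" using aligned all by blast
  qed
  ultimately show ?thesis unfolding y_def by blast
qed

lemma card_edge_balanced_quotients:
  assumes g: "\<forall>i<n. g i \<noteq> 0" "g 0 = 1"
  shows "card {x. normalized_diagonal x \<and> edge_balanced 1 (\<lambda>i. x i / g i)} = card stabilizing_diagonals"
proof -
  have div_mult: "(\<lambda>i. x i / g i * g i) = x" and mult_div: "(\<lambda>i. x i * g i / g i) = x"
    if "normalized_diagonal x" for x
  proof -
    have "x i / g i * g i = x i" "x i * g i / g i = x i" for i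
      using g that unfolding normalized_diagonal_def by (cases "i < n"; simp)+
    thus "(\<lambda>i. x i / g i * g i) = x" "(\<lambda>i. x i * g i / g i) = x" by auto
  qed
  have "bij_betw (\<lambda>x i. x i / g i) {x. normalized_diagonal x \<and> edge_balanced 1 (\<lambda>i. x i / g i)}
      stabilizing_diagonals"
  proof (rule bij_betw_byWitness[where f' = "\<lambda>d i. d i * g i"])
    show "\<forall>x\<in>{x. normalized_diagonal x \<and> edge_balanced 1 (\<lambda>i. x i / g i)}. (\<lambda>i. x i / g i * g i) = x"
      using div_mult by blast
    show "\<forall>d\<in>stabilizing_diagonals. (\<lambda>i. d i * g i / g i) = d"
      using mult_div unfolding stabilizing_diagonals_def by blast
    show "(\<lambda>x i. x i / g i) ` {x. normalized_diagonal x \<and> edge_balanced 1 (\<lambda>i. x i / g i)} \<subseteq> stabilizing_diagonals"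
      using g unfolding stabilizing_diagonals_def normalized_diagonal_def by auto
    show "(\<lambda>d i. d i * g i) ` stabilizing_diagonals \<subseteq> {x. normalized_diagonal x \<and> edge_balanced 1 (\<lambda>i. x i / g i)}"
    proof safe
      fix d assume d: "d \<in> stabilizing_diagonals"
      thus "normalized_diagonal (\<lambda>i. d i * g i)"
        using g unfolding stabilizing_diagonals_def normalized_diagonal_def by auto
      show "edge_balanced 1 (\<lambda>i. d i * g i / g i)"
        using d mult_div[of d] unfolding stabilizing_diagonals_def by simp
    qed
  qed
  thus ?thesis by (rule bij_betw_same_card)
qed

text \<open>The normalized eigenvectors are exactly the stabilizing diagonals multiplied by \<open>u g\<close>.\<close>
lemma card_proj_eigvariety_eq_card_stabilizing_diagonals:
  fixes u :: "nat \<Rightarrow> real" and g :: "nat \<Rightarrow> complex"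
  assumes u: "\<forall>i<n. 0 < u i" "u 0 = 1" and \<kappa>: "cmod \<kappa> = 1"
    and g: "\<forall>i<n. g i \<noteq> 0" "g 0 = 1" "edge_balanced \<kappa> g"
    and T: "\<And>x. eigenpair m n T lam x \<longleftrightarrow> (\<forall>i\<ge>n. x i = 0) \<and> (\<exists>i<n. x i \<noteq> 0) \<and>
      (\<forall>i<n. complex_of_real (u i) ^ (m - 1) * adj_sum x i
              = \<kappa> * adj_sum (\<lambda>j. complex_of_real (u j)) i * x i ^ (m - 1))"
  shows "card (proj_eigvariety m n T lam) = card stabilizing_diagonals"
proof -
  define U where "U j = complex_of_real (u j)" for j
  have U: "\<forall>i<n. U i \<noteq> 0" "U 0 = 1" using u unfolding U_def by auto
  have "\<kappa> \<noteq> 0" using \<kappa> by auto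
  have eigen_balanced: "(\<forall>i<n. x i \<noteq> 0) \<and> edge_balanced \<kappa> (\<lambda>i. x i / U i)"
    if "eigenpair m n T lam x" for x
    using eigen_equation_edge_balanced[OF u(1) \<kappa>] that unfolding T U_def by blast
  have "{x. eigenpair m n T lam x \<and> x 0 = 1}
      = {x. normalized_diagonal x \<and> edge_balanced 1 (\<lambda>i. x i / (U i * g i))}"
  proof (intro set_eqI iffI; clarify)
    fix x assume x: "eigenpair m n T lam x" "x 0 = 1"
    have "edge_balanced (\<kappa> / \<kappa>) (\<lambda>i. x i / U i / g i)"
      using eigen_balanced[OF x(1)] g(3) by (rule edge_balanced_divide[OF conjunct2])
    thus "normalized_diagonal x \<and> edge_balanced 1 (\<lambda>i. x i / (U i * g i))"
      using eigen_balanced[OF x(1)] x T \<open>\<kappa> \<noteq> 0\<close> unfolding normalized_diagonal_def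
      by (simp add: divide_divide_eq_left)
  next
    fix x assume x: "normalized_diagonal x" "edge_balanced 1 (\<lambda>i. x i / (U i * g i))"
    have "edge_balanced \<kappa> (\<lambda>i. x i / (U i * g i) * g i)"
      using edge_balanced_mult[OF x(2) g(3)] by (simp only: mult_1)
    moreover have "x i / (U i * g i) * g i = x i / U i" if "i < n" for i
      using g U that by simp
    ultimately have bal: "edge_balanced \<kappa> (\<lambda>i. x i / U i)"
      using edge_balanced_cong[of "\<lambda>i. x i / (U i * g i) * g i" "\<lambda>i. x i / U i" \<kappa>] by blast
    have "complex_of_real (u i) ^ (m - 1) * adj_sum x i
        = \<kappa> * adj_sum (\<lambda>j. complex_of_real (u j)) i * x i ^ (m - 1)" if "i < n" for i
    proof -
      have "adj_sum x i = adj_sum (\<lambda>j. U j * (x j / U j)) i"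
        using U by (intro adj_sum_cong) simp
      also have "\<dots> = \<kappa> * (x i / U i) ^ (m - 1) * adj_sum U i"
        by (rule adj_sum_mult_edge_balanced[OF bal])
      finally show ?thesis using U that unfolding U_def by (simp add: power_divide field_simps)
    qed
    moreover have "\<exists>i<n. x i \<noteq> 0"
      using x(1) n_pos unfolding normalized_diagonal_def by (intro exI[of _ 0]) auto
    ultimately show "eigenpair m n T lam x \<and> x 0 = 1"
      using x(1) unfolding T normalized_diagonal_def by blast
  qed
  moreover have "\<forall>i<n. U i * g i \<noteq> 0" "U 0 * g 0 = 1" using U g by auto
  ultimately have "card {x. eigenpair m n T lam x \<and> x 0 = 1} = card stabilizing_diagonals"
    using card_edge_balanced_quotients by simp
  moreover have "x 0 \<noteq> 0" if "eigenpair m n T lam x" for x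
    using eigen_balanced[OF that] n_pos by simp
  ultimately show ?thesis using card_proj_eigvariety[of m n T lam] by simp
qed

lemma card_proj_eigvariety_lap_zero:
  "card (proj_eigvariety m n (lap_tensor m n E) 0) = card stabilizing_diagonals"
proof (rule card_proj_eigvariety_eq_card_stabilizing_diagonals[where u = "\<lambda>_. 1" and g = "\<lambda>_. 1"])
  fix x
  have "tensor_apply m n (lap_tensor m n E) x i = 0 * x i ^ (m - 1)
      \<longleftrightarrow> complex_of_real 1 ^ (m - 1) * adj_sum x i
          = 1 * adj_sum (\<lambda>j. complex_of_real 1) i * x i ^ (m - 1)" if "i < n" for i
    using that by (auto simp: tensor_apply_lap adj_sum_one)
  thus "eigenpair m n (lap_tensor m n E) 0 x \<longleftrightarrow> (\<forall>i\<ge>n. x i = 0) \<and> (\<exists>i<n. x i \<noteq> 0) \<and>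
      (\<forall>i<n. complex_of_real 1 ^ (m - 1) * adj_sum x i
              = 1 * adj_sum (\<lambda>j. complex_of_real 1) i * x i ^ (m - 1))"
    unfolding eigenpair_def by blast
qed (auto intro: edge_balanced_const)

text \<open>For an odd colouring \<open>f\<close>, the vector \<open>\<omega>\<^sup>f\<close> has all edge products \<open>\<omega>\<^sup>m\<^sup>/\<^sup>2 = -1\<close>.\<close>
lemma odd_coloring_gauge:
  assumes "odd_colorable m E"
  obtains g :: "nat \<Rightarrow> complex" where "\<forall>i<n. g i \<noteq> 0" "g 0 = 1" "edge_balanced (-1) g"
proof -
  obtain f where "even m" and f: "\<forall>e\<in>E. (\<Sum>v\<in>e. f v) mod m = m div 2"
    using assms unfolding odd_colorable_def by blast
  define h where "h i = unit_root m ^ f i" for i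
  have "(unit_root m ^ j) ^ m = 1" for j using unit_root_power_power_self m_ge_2 by simp
  moreover have "(\<Prod>j\<in>e. h j) = -1" if "e \<in> E" for e
  proof -
    have "(\<Prod>j\<in>e. h j) = unit_root m ^ ((\<Sum>v\<in>e. f v) mod m)"
      unfolding h_def power_sum[symmetric] using m_ge_2 by (simp add: unit_root_power_mod[symmetric])
    thus ?thesis using f that unit_root_power_half[OF \<open>even m\<close>] m_ge_2 by simp
  qed
  ultimately have "edge_balanced (-1) h" by (simp add: edge_balanced_iff_prod_edge h_def)
  hence "edge_balanced (-1 / 1) (\<lambda>i. h i / h 0)"
    by (rule edge_balanced_divide[OF _ edge_balanced_const])
  moreover have "h i \<noteq> 0" for i unfolding h_def by simp
  ultimately show ?thesis using that[of "\<lambda>i. h i / h 0"] by simp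
qed

lemma card_proj_eigvariety_slap_zero:
  assumes "odd_colorable m E"
  shows "card (proj_eigvariety m n (slap_tensor m n E) 0) = card stabilizing_diagonals"
proof -
  obtain g :: "nat \<Rightarrow> complex" where g: "\<forall>i<n. g i \<noteq> 0" "g 0 = 1" "edge_balanced (-1) g"
    by (rule odd_coloring_gauge[OF assms])
  show ?thesis
  proof (rule card_proj_eigvariety_eq_card_stabilizing_diagonals[where u = "\<lambda>_. 1" and g = g and \<kappa> = "-1"])
    fix x
    have "tensor_apply m n (slap_tensor m n E) x i = 0 * x i ^ (m - 1)
        \<longleftrightarrow> complex_of_real 1 ^ (m - 1) * adj_sum x i
            = - 1 * adj_sum (\<lambda>j. complex_of_real 1) i * x i ^ (m - 1)" if "i < n" for i
      using that by (simp add: tensor_apply_slap adj_sum_one add_eq_0_iff)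
    thus "eigenpair m n (slap_tensor m n E) 0 x \<longleftrightarrow> (\<forall>i\<ge>n. x i = 0) \<and> (\<exists>i<n. x i \<noteq> 0) \<and>
        (\<forall>i<n. complex_of_real 1 ^ (m - 1) * adj_sum x i
                = - 1 * adj_sum (\<lambda>j. complex_of_real 1) i * x i ^ (m - 1))"
      unfolding eigenpair_def by blast
  qed (use g in simp_all)
qed

lemma card_proj_eigvariety_slap_perron:
  assumes u: "\<forall>i<n. 0 < u i" "u 0 = 1"
    and perron: "\<forall>i<n. real (hg_degree E i) * u i ^ (m - 1) + adj_sum u i = \<mu> * u i ^ (m - 1)"
  shows "card (proj_eigvariety m n (slap_tensor m n E) (complex_of_real \<mu>)) = card stabilizing_diagonals"
proof (rule card_proj_eigvariety_eq_card_stabilizing_diagonals[OF u, where g = "\<lambda>_. 1" and \<kappa> = 1])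
  fix x
  have "tensor_apply m n (slap_tensor m n E) x i = complex_of_real \<mu> * x i ^ (m - 1)
      \<longleftrightarrow> complex_of_real (u i) ^ (m - 1) * adj_sum x i
          = 1 * adj_sum (\<lambda>j. complex_of_real (u j)) i * x i ^ (m - 1)" if "i < n" for i
  proof -
    define d where "d = complex_of_real (\<mu> - real (hg_degree E i))"
    have "adj_sum u i = (\<mu> - real (hg_degree E i)) * u i ^ (m - 1)"
      using perron that by (simp add: algebra_simps)
    hence "adj_sum (\<lambda>j. complex_of_real (u j)) i = d * complex_of_real (u i) ^ (m - 1)"
      unfolding adj_sum_of_real d_def by simp
    moreover have "complex_of_real (u i) ^ (m - 1) \<noteq> 0" using u(1) that by force
    moreover have "tensor_apply m n (slap_tensor m n E) x i = complex_of_real \<mu> * x i ^ (m - 1)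
        \<longleftrightarrow> adj_sum x i = d * x i ^ (m - 1)"
      using that unfolding tensor_apply_slap[OF that] d_def by (auto simp: algebra_simps)
    ultimately show ?thesis by (auto simp: mult_ac)
  qed
  thus "eigenpair m n (slap_tensor m n E) (complex_of_real \<mu>) x \<longleftrightarrow> (\<forall>i\<ge>n. x i = 0) \<and> (\<exists>i<n. x i \<noteq> 0) \<and>
      (\<forall>i<n. complex_of_real (u i) ^ (m - 1) * adj_sum x i
              = 1 * adj_sum (\<lambda>j. complex_of_real (u j)) i * x i ^ (m - 1))"
    unfolding eigenpair_def by blast
qed (auto intro: edge_balanced_const)

end

theorem theorem3p7:
  fixes m n k r :: nat and E :: "nat set set" and e :: "nat \<Rightarrow> nat set" and d :: "nat \<Rightarrow> int"
  assumes "m \<ge> 2" and "n \<ge> 1"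
    and "uniform_hypergraph m n E"
    and "hg_connected n E"
    and "odd_colorable m E"
    and "bij_betw e {0..<k} E"
    and "has_snf_mod m k n (incidence e) r d"
  shows "stab_index m n (slap_tensor m n E) = stab_index m n (lap_tensor m n E)
       \<and> stab_index m n (lap_tensor m n E) = stab_index m n (adj_tensor m n E)
       \<and> real (stab_index m n (adj_tensor m n E)) =
           real m powi (int n - 1 - int r) * (\<Prod>i<r. real_of_int (d i))
       \<and> stab_index m n (slap_tensor m n E) =
           card (proj_eigvariety m n (slap_tensor m n E)
                   (complex_of_real (spectral_radius m n (slap_tensor m n E))))
       \<and> card (proj_eigvariety m n (slap_tensor m n E)
                   (complex_of_real (spectral_radius m n (slap_tensor m n E))))
           = card (proj_eigvariety m n (slap_tensor m n E) 0)
       \<and> card (proj_eigvariety m n (slap_tensor m n E) 0)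
           = card (proj_eigvariety m n (lap_tensor m n E) 0)"
proof -
  interpret connected_hg m n E
    using assms by unfold_locales auto
  obtain u \<mu> where u: "\<forall>i<n. u i > 0" "\<forall>i\<ge>n. u i = 0" "u 0 = 1"
    and perron: "\<forall>i<n. real (hg_degree E i) * u i ^ (m - 1) + adj_sum u i = \<mu> * u i ^ (m - 1)"
    using perron_vector by blast
  have "spectral_radius m n (slap_tensor m n E) = \<mu>"
    using spectral_radius_slap[OF u(1,2) perron] .
  thus ?thesis
    using stab_index_slap stab_index_lap stab_index_adj card_stabilizing_diagonals[OF assms(6,7)]
      card_proj_eigvariety_slap_perron[OF u(1,3) perron] card_proj_eigvariety_slap_zero[OF assms(5)]
      card_proj_eigvariety_lap_zero
    by simp
qed

end
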